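(* Let $M\models\mathrm{AA}$ and let $I\subseteq M$ be a proper cut. Then (i) $I$ is not formula-definable; (ii) if $1\le y$ for every $y\in M\setminus I$, then $M\setminus I$ is not formula-definable.
   Context: Structures are complete metric spaces of diameter at most $1$ in the language $L=\{+,\cdot,\wedge,\vee,0,1\}$ (operations $1$-Lipschitz, $d$ the only relation symbol). Affine formulas are built from $1$ and atomic formulas $d(t_1,t_2)$ using $+$, scalar multiplication by reals, $\sup_x$, $\inf_x$. $\mathrm{AA}$ is the set of all closed affine conditions true in every model of first-order Peano arithmetic (formulated in $L$ with lattice operations min/max and discrete metric). $x\le y$ means $x\wedge y=x$. A cut in $M$ is a nonempty $I\subseteq M$ such that $x\le y\in I$ implies $x\in I$, and $x\in I$ implies $x+1\in I$; it is proper if $I\ne M$. A set $D\subseteq M$ is formula-definable if it is closed and there is an affine formula $\phi(x)$ with parameters from $M$ such that $d(x,D)=\inf_{y\in D}d(x,y)=\phi^M(x)$ for all $x$. *)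

theory Defs
  imports Complex_Main
begin

record 'a lstruct =
  Mdom  :: "'a set"
  Md    :: "'a \<Rightarrow> 'a \<Rightarrow> real"
  Madd  :: "'a \<Rightarrow> 'a \<Rightarrow> 'a"
  Mmul  :: "'a \<Rightarrow> 'a \<Rightarrow> 'a"
  Mmeet :: "'a \<Rightarrow> 'a \<Rightarrow> 'a"
  Mjoin :: "'a \<Rightarrow> 'a \<Rightarrow> 'a"
  Mzero :: "'a"
  Mone  :: "'a"

definition lip_op :: "('a, 'b) lstruct_scheme \<Rightarrow> ('a \<Rightarrow> 'a \<Rightarrow> 'a) \<Rightarrow> bool" where
  "lip_op S f \<longleftrightarrow>
     (\<forall>x\<in>Mdom S. \<forall>y\<in>Mdom S. f x y \<in> Mdom S) \<and>
     (\<forall>x\<in>Mdom S. \<forall>x'\<in>Mdom S. \<forall>y\<in>Mdom S. \<forall>y'\<in>Mdom S.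
        Md S (f x y) (f x' y') \<le> max (Md S x x') (Md S y y'))"

definition m_converges :: "('a, 'b) lstruct_scheme \<Rightarrow> (nat \<Rightarrow> 'a) \<Rightarrow> 'a \<Rightarrow> bool" where
  "m_converges S s x \<longleftrightarrow> (\<forall>e>0. \<exists>N. \<forall>n\<ge>N. Md S (s n) x < e)"

definition m_complete :: "('a, 'b) lstruct_scheme \<Rightarrow> bool" where
  "m_complete S \<longleftrightarrow>
     (\<forall>s. (\<forall>n. s n \<in> Mdom S) \<longrightarrow> (\<forall>e>0. \<exists>N. \<forall>m\<ge>N. \<forall>n\<ge>N. Md S (s m) (s n) < e)
          \<longrightarrow> (\<exists>x\<in>Mdom S. m_converges S s x))"

definition lstructure :: "('a, 'b) lstruct_scheme \<Rightarrow> bool" where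
  "lstructure S \<longleftrightarrow>
     Mdom S \<noteq> {} \<and> Mzero S \<in> Mdom S \<and> Mone S \<in> Mdom S \<and>
     (\<forall>x\<in>Mdom S. \<forall>y\<in>Mdom S. 0 \<le> Md S x y \<and> Md S x y \<le> 1 \<and>
        (Md S x y = 0 \<longleftrightarrow> x = y) \<and> Md S x y = Md S y x) \<and>
     (\<forall>x\<in>Mdom S. \<forall>y\<in>Mdom S. \<forall>z\<in>Mdom S. Md S x z \<le> Md S x y + Md S y z) \<and>
     m_complete S \<and>
     lip_op S (Madd S) \<and> lip_op S (Mmul S) \<and> lip_op S (Mmeet S) \<and> lip_op S (Mjoin S)"

datatype 'p trm = Var nat | Par 'p | Zero | One
  | Add "'p trm" "'p trm" | Mul "'p trm" "'p trm"
  | Meet "'p trm" "'p trm" | Join "'p trm" "'p trm"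

datatype 'p afml = Cst1 | Dst "'p trm" "'p trm"
  | Pls "'p afml" "'p afml" | Scl real "'p afml"
  | SupQ nat "'p afml" | InfQ nat "'p afml"

fun tvars :: "'p trm \<Rightarrow> nat set" where
  "tvars (Var v) = {v}"
| "tvars (Par p) = {}"
| "tvars Zero = {}"
| "tvars One = {}"
| "tvars (Add s t) = tvars s \<union> tvars t"
| "tvars (Mul s t) = tvars s \<union> tvars t"
| "tvars (Meet s t) = tvars s \<union> tvars t"
| "tvars (Join s t) = tvars s \<union> tvars t"

fun fvars :: "'p afml \<Rightarrow> nat set" where
  "fvars Cst1 = {}"
| "fvars (Dst s t) = tvars s \<union> tvars t"
| "fvars (Pls a b) = fvars a \<union> fvars b"
| "fvars (Scl r a) = fvars a"
| "fvars (SupQ v a) = fvars a - {v}"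
| "fvars (InfQ v a) = fvars a - {v}"

fun teval :: "('a, 'b) lstruct_scheme \<Rightarrow> ('p \<Rightarrow> 'a) \<Rightarrow> (nat \<Rightarrow> 'a) \<Rightarrow> 'p trm \<Rightarrow> 'a" where
  "teval S \<pi> \<sigma> (Var v) = \<sigma> v"
| "teval S \<pi> \<sigma> (Par p) = \<pi> p"
| "teval S \<pi> \<sigma> Zero = Mzero S"
| "teval S \<pi> \<sigma> One = Mone S"
| "teval S \<pi> \<sigma> (Add s t) = Madd S (teval S \<pi> \<sigma> s) (teval S \<pi> \<sigma> t)"
| "teval S \<pi> \<sigma> (Mul s t) = Mmul S (teval S \<pi> \<sigma> s) (teval S \<pi> \<sigma> t)"
| "teval S \<pi> \<sigma> (Meet s t) = Mmeet S (teval S \<pi> \<sigma> s) (teval S \<pi> \<sigma> t)"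
| "teval S \<pi> \<sigma> (Join s t) = Mjoin S (teval S \<pi> \<sigma> s) (teval S \<pi> \<sigma> t)"

fun feval :: "('a, 'b) lstruct_scheme \<Rightarrow> ('p \<Rightarrow> 'a) \<Rightarrow> (nat \<Rightarrow> 'a) \<Rightarrow> 'p afml \<Rightarrow> real" where
  "feval S \<pi> \<sigma> Cst1 = 1"
| "feval S \<pi> \<sigma> (Dst s t) = Md S (teval S \<pi> \<sigma> s) (teval S \<pi> \<sigma> t)"
| "feval S \<pi> \<sigma> (Pls a b) = feval S \<pi> \<sigma> a + feval S \<pi> \<sigma> b"
| "feval S \<pi> \<sigma> (Scl r a) = r * feval S \<pi> \<sigma> a"
| "feval S \<pi> \<sigma> (SupQ v a) = (SUP x\<in>Mdom S. feval S \<pi> (\<sigma>(v := x)) a)"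
| "feval S \<pi> \<sigma> (InfQ v a) = (INF x\<in>Mdom S. feval S \<pi> (\<sigma>(v := x)) a)"

text \<open>Affine sentences: no free variables and no parameters. A closed condition is
  written as a sentence \<phi>, standing for the condition "\<phi> \<le> 0".\<close>
definition sentence :: "'p afml \<Rightarrow> bool" where
  "sentence \<phi> \<longleftrightarrow> fvars \<phi> = {} \<and> set_afml \<phi> = {}"

definition satisfies_cond :: "('a, 'b) lstruct_scheme \<Rightarrow> 'p afml \<Rightarrow> bool" where
  "satisfies_cond S \<phi> \<longleftrightarrow>
     (\<forall>\<pi> \<sigma>. range \<sigma> \<subseteq> Mdom S \<longrightarrow> feval S \<pi> \<sigma> \<phi> \<le> 0)"

datatype pterm = PVar nat | P0 | P1 | PAdd pterm pterm | PMul pterm pterm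
datatype pfml = PEq pterm pterm | PNot pfml | PAnd pfml pfml | PEx nat pfml

fun peval :: "('a, 'b) lstruct_scheme \<Rightarrow> (nat \<Rightarrow> 'a) \<Rightarrow> pterm \<Rightarrow> 'a" where
  "peval N \<sigma> (PVar v) = \<sigma> v"
| "peval N \<sigma> P0 = Mzero N"
| "peval N \<sigma> P1 = Mone N"
| "peval N \<sigma> (PAdd s t) = Madd N (peval N \<sigma> s) (peval N \<sigma> t)"
| "peval N \<sigma> (PMul s t) = Mmul N (peval N \<sigma> s) (peval N \<sigma> t)"

fun pholds :: "('a, 'b) lstruct_scheme \<Rightarrow> (nat \<Rightarrow> 'a) \<Rightarrow> pfml \<Rightarrow> bool" where
  "pholds N \<sigma> (PEq s t) = (peval N \<sigma> s = peval N \<sigma> t)"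
| "pholds N \<sigma> (PNot a) = (\<not> pholds N \<sigma> a)"
| "pholds N \<sigma> (PAnd a b) = (pholds N \<sigma> a \<and> pholds N \<sigma> b)"
| "pholds N \<sigma> (PEx v a) = (\<exists>x\<in>Mdom N. pholds N (\<sigma>(v := x)) a)"

definition pa_le :: "('a, 'b) lstruct_scheme \<Rightarrow> 'a \<Rightarrow> 'a \<Rightarrow> bool" where
  "pa_le N x y \<longleftrightarrow> (\<exists>z\<in>Mdom N. Madd N x z = y)"

text \<open>An L-structure arising from a model of first-order PA (language 0,1,+,*;
  axioms of Q with successor x+1, plus the full induction schema with parameters),
  with discrete metric and meet/join = min/max of the arithmetic order.\<close>
definition pa_model :: "('a, 'b) lstruct_scheme \<Rightarrow> bool" where
  "pa_model N \<longleftrightarrow>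
     Mdom N \<noteq> {} \<and> Mzero N \<in> Mdom N \<and> Mone N \<in> Mdom N \<and>
     (\<forall>x\<in>Mdom N. \<forall>y\<in>Mdom N. Madd N x y \<in> Mdom N \<and> Mmul N x y \<in> Mdom N) \<and>
     (\<forall>x\<in>Mdom N. Madd N x (Mone N) \<noteq> Mzero N) \<and>
     (\<forall>x\<in>Mdom N. \<forall>y\<in>Mdom N. Madd N x (Mone N) = Madd N y (Mone N) \<longrightarrow> x = y) \<and>
     (\<forall>x\<in>Mdom N. Madd N x (Mzero N) = x) \<and>
     (\<forall>x\<in>Mdom N. \<forall>y\<in>Mdom N. Madd N x (Madd N y (Mone N)) = Madd N (Madd N x y) (Mone N)) \<and>
     (\<forall>x\<in>Mdom N. Mmul N x (Mzero N) = Mzero N) \<and>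
     (\<forall>x\<in>Mdom N. \<forall>y\<in>Mdom N. Mmul N x (Madd N y (Mone N)) = Madd N (Mmul N x y) x) \<and>
     (\<forall>\<phi> v \<sigma>. range \<sigma> \<subseteq> Mdom N \<longrightarrow>
        pholds N (\<sigma>(v := Mzero N)) \<phi> \<longrightarrow>
        (\<forall>a\<in>Mdom N. pholds N (\<sigma>(v := a)) \<phi> \<longrightarrow> pholds N (\<sigma>(v := Madd N a (Mone N))) \<phi>) \<longrightarrow>
        (\<forall>a\<in>Mdom N. pholds N (\<sigma>(v := a)) \<phi>)) \<and>
     (\<forall>x\<in>Mdom N. \<forall>y\<in>Mdom N. Md N x y = (if x = y then 0 else 1)) \<and>
     (\<forall>x\<in>Mdom N. \<forall>y\<in>Mdom N. Mmeet N x y = (if pa_le N x y then x else y)) \<and>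
     (\<forall>x\<in>Mdom N. \<forall>y\<in>Mdom N. Mjoin N x y = (if pa_le N x y then y else x))"

text \<open>AA: closed affine conditions true in every model of PA. Models are taken with
  universe a set of naturals, i.e. countable models (enough by downward Loewenheim-Skolem).\<close>
definition AA :: "'p afml set" where
  "AA = {\<phi>. sentence \<phi> \<and> (\<forall>N :: nat lstruct. pa_model N \<longrightarrow> satisfies_cond N \<phi>)}"

definition models_AA :: "('a, 'b) lstruct_scheme \<Rightarrow> bool" where
  "models_AA M \<longleftrightarrow> lstructure M \<and> (\<forall>\<phi> \<in> (AA :: 'a afml set). satisfies_cond M \<phi>)"

definition le_M :: "('a, 'b) lstruct_scheme \<Rightarrow> 'a \<Rightarrow> 'a \<Rightarrow> bool" where
  "le_M M x y \<longleftrightarrow> Mmeet M x y = x"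

definition is_cut :: "('a, 'b) lstruct_scheme \<Rightarrow> 'a set \<Rightarrow> bool" where
  "is_cut M I \<longleftrightarrow> I \<subseteq> Mdom M \<and> I \<noteq> {} \<and>
     (\<forall>x\<in>Mdom M. \<forall>y\<in>I. le_M M x y \<longrightarrow> x \<in> I) \<and>
     (\<forall>x\<in>I. Madd M x (Mone M) \<in> I)"

definition proper_cut :: "('a, 'b) lstruct_scheme \<Rightarrow> 'a set \<Rightarrow> bool" where
  "proper_cut M I \<longleftrightarrow> is_cut M I \<and> I \<noteq> Mdom M"

definition m_closed :: "('a, 'b) lstruct_scheme \<Rightarrow> 'a set \<Rightarrow> bool" where
  "m_closed M D \<longleftrightarrow> D \<subseteq> Mdom M \<and>
     (\<forall>s x. (\<forall>n. s n \<in> D) \<longrightarrow> x \<in> Mdom M \<longrightarrow> m_converges M s x \<longrightarrow> x \<in> D)"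

definition dist_to :: "('a, 'b) lstruct_scheme \<Rightarrow> 'a set \<Rightarrow> 'a \<Rightarrow> real" where
  "dist_to M D x = (INF y\<in>D. Md M x y)"

definition formula_definable :: "('a, 'b) lstruct_scheme \<Rightarrow> 'a set \<Rightarrow> bool" where
  "formula_definable M D \<longleftrightarrow> m_closed M D \<and>
     (\<exists>\<phi> :: 'a afml. fvars \<phi> \<subseteq> {0} \<and> set_afml \<phi> \<subseteq> Mdom M \<and>
        (\<forall>x\<in>Mdom M. dist_to M D x = feval M id (\<lambda>_. x) \<phi>))"

end

theory Submission
  imports Defs
begin

(*
  In a model of PA an affine formula \<phi>(x) takes only finitely many values, and every property
  of its value is PA-definable, so induction shows: if \<phi>(x + 1) \<le> \<phi>(x) for all x, then
  \<phi>(y) \<le> \<phi>(0) for all y. Finiteness of the set of values turns this into the single condition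
    \<phi>(y) - \<phi>(0) - K * sup_x (\<phi>(x + 1) - \<phi>(x)) \<le> 0
  with K depending only on \<phi>; with the parameters universally quantified it is a sentence of
  AA, so the same descent principle holds in every model M of AA.
  The distance d(x, I) to a cut I does not increase from x to x + 1, so a defining formula for
  d(-, I) would give d(a, I) \<le> d(0, I) = 0 for every a, which contradicts closedness of I.
  For the complement D, AA proves that x \<mapsto> x + 1 does not shrink distances and that every
  y \<ge> 1 is approximately a successor; by completeness every element of D is the successor of
  an element of D, so d(x, D) does not decrease, and d(0, D) \<le> d(y, D) = 0 for y \<in> D
  contradicts 0 \<notin> D.
*)

section \<open>Substitution and universal closure\<close>

fun bvars :: "'p afml \<Rightarrow> nat set" where
  "bvars Cst1 = {}"
| "bvars (Dst s t) = {}"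
| "bvars (Pls a b) = bvars a \<union> bvars b"
| "bvars (Scl r a) = bvars a"
| "bvars (SupQ v a) = insert v (bvars a)"
| "bvars (InfQ v a) = insert v (bvars a)"

text \<open>Substitution for variables (\<open>\<rho>\<close>) and parameters (\<open>\<tau>\<close>) does not rename bound variables;
  it is only used when no substituted term contains a variable bound in the formula.\<close>

fun tsub :: "(nat \<Rightarrow> 'q trm) \<Rightarrow> ('p \<Rightarrow> 'q trm) \<Rightarrow> 'p trm \<Rightarrow> 'q trm" where
  "tsub \<rho> \<tau> (Var v) = \<rho> v"
| "tsub \<rho> \<tau> (Par p) = \<tau> p"
| "tsub \<rho> \<tau> Zero = Zero"
| "tsub \<rho> \<tau> One = One"
| "tsub \<rho> \<tau> (Add s t) = Add (tsub \<rho> \<tau> s) (tsub \<rho> \<tau> t)"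
| "tsub \<rho> \<tau> (Mul s t) = Mul (tsub \<rho> \<tau> s) (tsub \<rho> \<tau> t)"
| "tsub \<rho> \<tau> (Meet s t) = Meet (tsub \<rho> \<tau> s) (tsub \<rho> \<tau> t)"
| "tsub \<rho> \<tau> (Join s t) = Join (tsub \<rho> \<tau> s) (tsub \<rho> \<tau> t)"

fun fsub :: "(nat \<Rightarrow> 'q trm) \<Rightarrow> ('p \<Rightarrow> 'q trm) \<Rightarrow> 'p afml \<Rightarrow> 'q afml" where
  "fsub \<rho> \<tau> Cst1 = Cst1"
| "fsub \<rho> \<tau> (Dst s t) = Dst (tsub \<rho> \<tau> s) (tsub \<rho> \<tau> t)"
| "fsub \<rho> \<tau> (Pls a b) = Pls (fsub \<rho> \<tau> a) (fsub \<rho> \<tau> b)"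
| "fsub \<rho> \<tau> (Scl r a) = Scl r (fsub \<rho> \<tau> a)"
| "fsub \<rho> \<tau> (SupQ v a) = SupQ v (fsub (\<rho>(v := Var v)) \<tau> a)"
| "fsub \<rho> \<tau> (InfQ v a) = InfQ v (fsub (\<rho>(v := Var v)) \<tau> a)"

text \<open>Since a closed condition \<open>\<phi>\<close> stands for \<open>\<phi> \<le> 0\<close>, prefixing \<open>sup\<close>-quantifiers is the
  universal closure.\<close>

fun sup_close :: "nat list \<Rightarrow> 'p afml \<Rightarrow> 'p afml" where
  "sup_close [] a = a"
| "sup_close (v # vs) a = SupQ v (sup_close vs a)"

lemma finite_tvars: "finite (tvars t)"
  by (induct t) auto

lemma finite_bvars: "finite (bvars a)"
  by (induct a) auto

lemma finite_fvars: "finite (fvars a)"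
  by (induct a) (auto simp: finite_tvars)

lemma finite_set_trm: "finite (set_trm t)"
  by (induct t) auto

lemma finite_set_afml: "finite (set_afml a)"
  by (induct a) (auto simp: finite_set_trm)

lemma teval_cong: "(\<And>u. u \<in> tvars t \<Longrightarrow> \<sigma> u = \<sigma>' u) \<Longrightarrow> teval S \<pi> \<sigma> t = teval S \<pi> \<sigma>' t"
  by (induct t) auto

lemma teval_upd_fresh: "v \<notin> tvars t \<Longrightarrow> teval S \<pi> (\<sigma>(v := x)) t = teval S \<pi> \<sigma> t"
  by (rule teval_cong) auto

lemma teval_cong_params:
  "(\<And>p. p \<in> set_trm t \<Longrightarrow> \<pi> p = \<pi>' p) \<Longrightarrow> teval S \<pi> \<sigma> t = teval S \<pi>' \<sigma> t"
  by (induct t) auto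

lemma feval_cong_params:
  "(\<And>p. p \<in> set_afml a \<Longrightarrow> \<pi> p = \<pi>' p) \<Longrightarrow> feval S \<pi> \<sigma> a = feval S \<pi>' \<sigma> a"
proof (induct a arbitrary: \<sigma>)
  case (Dst s t)
  have "teval S \<pi> \<sigma> s = teval S \<pi>' \<sigma> s" "teval S \<pi> \<sigma> t = teval S \<pi>' \<sigma> t"
    using Dst by (auto intro: teval_cong_params)
  then show ?case by simp
qed auto

lemma teval_tsub:
  "(\<forall>p\<in>set_trm t. teval S \<pi>' \<sigma> (\<tau> p) = \<pi> p) \<Longrightarrow>
   teval S \<pi>' \<sigma> (tsub \<rho> \<tau> t) = teval S \<pi> (\<lambda>u. teval S \<pi>' \<sigma> (\<rho> u)) t"
  by (induct t) auto

lemma teval_subst_upd: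
  assumes "\<forall>u. \<rho> u = Var u \<or> v \<notin> tvars (\<rho> u)"
  shows "(\<lambda>u. teval S \<pi> (\<sigma>(v := x)) ((\<rho>(v := Var v)) u)) = (\<lambda>u. teval S \<pi> \<sigma> (\<rho> u))(v := x)"
proof
  fix u
  show "teval S \<pi> (\<sigma>(v := x)) ((\<rho>(v := Var v)) u) = ((\<lambda>u. teval S \<pi> \<sigma> (\<rho> u))(v := x)) u"
    using assms[rule_format, of u] by (cases "u = v") (auto simp: teval_upd_fresh)
qed

lemma feval_fsub:
  assumes "\<forall>p\<in>set_afml a. teval S \<pi>' \<sigma> (\<tau> p) = \<pi> p"
    and "\<forall>p. tvars (\<tau> p) \<inter> bvars a = {}"
    and "\<forall>u. \<rho> u = Var u \<or> tvars (\<rho> u) \<inter> bvars a = {}"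
  shows "feval S \<pi>' \<sigma> (fsub \<rho> \<tau> a) = feval S \<pi> (\<lambda>u. teval S \<pi>' \<sigma> (\<rho> u)) a"
  using assms
proof (induct a arbitrary: \<sigma> \<rho>)
  case (Dst s t)
  then show ?case
    using teval_tsub[of s S \<pi>' \<sigma> \<tau> \<pi> \<rho>] teval_tsub[of t S \<pi>' \<sigma> \<tau> \<pi> \<rho>] by simp
next
  case (Pls a b)
  have "feval S \<pi>' \<sigma> (fsub \<rho> \<tau> a) = feval S \<pi> (\<lambda>u. teval S \<pi>' \<sigma> (\<rho> u)) a"
    by (rule Pls.hyps(1)) (use Pls.prems in auto)
  moreover have "feval S \<pi>' \<sigma> (fsub \<rho> \<tau> b) = feval S \<pi> (\<lambda>u. teval S \<pi>' \<sigma> (\<rho> u)) b"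
    by (rule Pls.hyps(2)) (use Pls.prems in auto)
  ultimately show ?case by simp
next
  case (SupQ v a)
  have "feval S \<pi>' (\<sigma>(v := x)) (fsub (\<rho>(v := Var v)) \<tau> a)
      = feval S \<pi> ((\<lambda>u. teval S \<pi>' \<sigma> (\<rho> u))(v := x)) a" for x
  proof -
    have "feval S \<pi>' (\<sigma>(v := x)) (fsub (\<rho>(v := Var v)) \<tau> a)
        = feval S \<pi> (\<lambda>u. teval S \<pi>' (\<sigma>(v := x)) ((\<rho>(v := Var v)) u)) a"
    proof (rule SupQ.hyps)
      show "\<forall>p\<in>set_afml a. teval S \<pi>' (\<sigma>(v := x)) (\<tau> p) = \<pi> p"
        using SupQ.prems(1,2) by (auto simp: teval_upd_fresh)
    qed (use SupQ.prems in auto)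
    also have "\<dots> = feval S \<pi> ((\<lambda>u. teval S \<pi>' \<sigma> (\<rho> u))(v := x)) a"
      using SupQ.prems(3) by (subst teval_subst_upd) auto
    finally show ?thesis .
  qed
  then show ?case by simp
next
  case (InfQ v a)
  have "feval S \<pi>' (\<sigma>(v := x)) (fsub (\<rho>(v := Var v)) \<tau> a)
      = feval S \<pi> ((\<lambda>u. teval S \<pi>' \<sigma> (\<rho> u))(v := x)) a" for x
  proof -
    have "feval S \<pi>' (\<sigma>(v := x)) (fsub (\<rho>(v := Var v)) \<tau> a)
        = feval S \<pi> (\<lambda>u. teval S \<pi>' (\<sigma>(v := x)) ((\<rho>(v := Var v)) u)) a"
    proof (rule InfQ.hyps)
      show "\<forall>p\<in>set_afml a. teval S \<pi>' (\<sigma>(v := x)) (\<tau> p) = \<pi> p"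
        using InfQ.prems(1,2) by (auto simp: teval_upd_fresh)
    qed (use InfQ.prems in auto)
    also have "\<dots> = feval S \<pi> ((\<lambda>u. teval S \<pi>' \<sigma> (\<rho> u))(v := x)) a"
      using InfQ.prems(3) by (subst teval_subst_upd) auto
    finally show ?thesis .
  qed
  then show ?case by simp
qed simp_all

lemma set_afml_fsub_empty:
  "\<forall>u. set_trm (\<rho> u) = {} \<Longrightarrow> \<forall>p. set_trm (\<tau> p) = {} \<Longrightarrow> set_afml (fsub \<rho> \<tau> a) = {}"
proof (induct a arbitrary: \<rho>)
  case (Dst s t)
  have "set_trm (tsub \<rho> \<tau> r) = {}" for r
    using Dst by (induct r) auto
  then show ?case by simp
qed auto

lemma fvars_sup_close: "fvars (sup_close vs a) = fvars a - set vs"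
  by (induct vs) auto

lemma set_afml_sup_close: "set_afml (sup_close vs a) = set_afml a"
  by (induct vs) auto

definition bounded_prestructure :: "('a, 'b) lstruct_scheme \<Rightarrow> bool" where
  "bounded_prestructure S \<longleftrightarrow> Mdom S \<noteq> {} \<and> Mzero S \<in> Mdom S \<and> Mone S \<in> Mdom S \<and>
    (\<forall>x\<in>Mdom S. \<forall>y\<in>Mdom S. Madd S x y \<in> Mdom S \<and> Mmul S x y \<in> Mdom S \<and>
       Mmeet S x y \<in> Mdom S \<and> Mjoin S x y \<in> Mdom S \<and> 0 \<le> Md S x y \<and> Md S x y \<le> 1)"

lemma lstructure_imp_bounded_prestructure: "lstructure S \<Longrightarrow> bounded_prestructure S"
  unfolding lstructure_def bounded_prestructure_def lip_op_def by simp

lemma pa_model_imp_bounded_prestructure: "pa_model N \<Longrightarrow> bounded_prestructure N"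
  unfolding pa_model_def bounded_prestructure_def by auto

lemma range_fun_upd_subset: "range \<sigma> \<subseteq> A \<Longrightarrow> x \<in> A \<Longrightarrow> range (\<sigma>(v := x)) \<subseteq> A"
  by auto

lemma teval_in_Mdom:
  "bounded_prestructure S \<Longrightarrow> range \<sigma> \<subseteq> Mdom S \<Longrightarrow> \<forall>p\<in>set_trm t. \<pi> p \<in> Mdom S \<Longrightarrow>
   teval S \<pi> \<sigma> t \<in> Mdom S"
  by (induct t) (auto simp: bounded_prestructure_def)

fun fbound :: "'p afml \<Rightarrow> real" where
  "fbound Cst1 = 1"
| "fbound (Dst s t) = 1"
| "fbound (Pls a b) = fbound a + fbound b"
| "fbound (Scl r a) = \<bar>r\<bar> * fbound a"
| "fbound (SupQ v a) = fbound a"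
| "fbound (InfQ v a) = fbound a"

lemma abs_cSUP_le:
  fixes f :: "'x \<Rightarrow> real"
  assumes "A \<noteq> {}" "\<forall>x\<in>A. \<bar>f x\<bar> \<le> b"
  shows "\<bar>SUP x\<in>A. f x\<bar> \<le> b"
proof -
  have "bdd_above (f ` A)"
    using assms(2) by (auto intro!: bdd_aboveI[of _ b] simp: abs_le_iff)
  moreover obtain x0 where "x0 \<in> A" using assms(1) by blast
  ultimately have "f x0 \<le> (SUP x\<in>A. f x)" by (rule cSUP_upper2) simp
  moreover have "(SUP x\<in>A. f x) \<le> b" using assms by (intro cSUP_least) (auto simp: abs_le_iff)
  ultimately show ?thesis using assms(2) \<open>x0 \<in> A\<close> by (force simp: abs_le_iff)
qed

lemma abs_cINF_le:
  fixes f :: "'x \<Rightarrow> real"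
  assumes "A \<noteq> {}" "\<forall>x\<in>A. \<bar>f x\<bar> \<le> b"
  shows "\<bar>INF x\<in>A. f x\<bar> \<le> b"
proof -
  have "bdd_below (f ` A)"
    using assms(2) by (auto intro!: bdd_belowI[of _ "-b"] simp: abs_le_iff)
  moreover obtain x0 where "x0 \<in> A" using assms(1) by blast
  ultimately have "(INF x\<in>A. f x) \<le> f x0" by (rule cINF_lower2) simp
  moreover have "-b \<le> (INF x\<in>A. f x)" using assms by (intro cINF_greatest) (auto simp: abs_le_iff)
  ultimately show ?thesis using assms(2) \<open>x0 \<in> A\<close> by (force simp: abs_le_iff)
qed

lemma abs_feval_le_fbound:
  assumes "bounded_prestructure S" "range \<sigma> \<subseteq> Mdom S" "\<forall>p\<in>set_afml a. \<pi> p \<in> Mdom S"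
  shows "\<bar>feval S \<pi> \<sigma> a\<bar> \<le> fbound a"
  using assms(2,3)
proof (induct a arbitrary: \<sigma>)
  case (Dst s t)
  have "teval S \<pi> \<sigma> s \<in> Mdom S" "teval S \<pi> \<sigma> t \<in> Mdom S"
    using Dst assms(1) by (auto intro!: teval_in_Mdom)
  then show ?case using assms(1) unfolding bounded_prestructure_def by auto
next
  case (Pls a b)
  then show ?case by (simp add: abs_triangle_ineq[THEN order_trans] add_mono)
next
  case (Scl r a)
  then show ?case by (simp add: abs_mult mult_left_mono)
next
  case (SupQ v a)
  then have "\<forall>x\<in>Mdom S. \<bar>feval S \<pi> (\<sigma>(v := x)) a\<bar> \<le> fbound a"
    by (auto intro!: SupQ.hyps range_fun_upd_subset)
  then show ?case using assms(1) unfolding bounded_prestructure_def by (auto intro: abs_cSUP_le)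
next
  case (InfQ v a)
  then have "\<forall>x\<in>Mdom S. \<bar>feval S \<pi> (\<sigma>(v := x)) a\<bar> \<le> fbound a"
    by (auto intro!: InfQ.hyps range_fun_upd_subset)
  then show ?case using assms(1) unfolding bounded_prestructure_def by (auto intro: abs_cINF_le)
qed simp

lemma feval_bdd_above:
  assumes "bounded_prestructure S" "range \<sigma> \<subseteq> Mdom S" "\<forall>p\<in>set_afml a. \<pi> p \<in> Mdom S"
  shows "bdd_above ((\<lambda>x. feval S \<pi> (\<sigma>(v := x)) a) ` Mdom S)"
  using abs_feval_le_fbound[OF assms(1) range_fun_upd_subset[OF assms(2)] assms(3)]
  by (intro bdd_aboveI[of _ "fbound a"]) (auto simp: abs_le_iff)

lemma feval_bdd_below:
  assumes "bounded_prestructure S" "range \<sigma> \<subseteq> Mdom S" "\<forall>p\<in>set_afml a. \<pi> p \<in> Mdom S"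
  shows "bdd_below ((\<lambda>x. feval S \<pi> (\<sigma>(v := x)) a) ` Mdom S)"
proof (rule bdd_belowI)
  fix y assume "y \<in> (\<lambda>x. feval S \<pi> (\<sigma>(v := x)) a) ` Mdom S"
  then obtain x where "x \<in> Mdom S" "y = feval S \<pi> (\<sigma>(v := x)) a" by blast
  then show "- fbound a \<le> y"
    using abs_feval_le_fbound[OF assms(1) range_fun_upd_subset[OF assms(2)] assms(3), of x v]
    by (simp add: abs_le_iff)
qed

lemma feval_le_sup_close:
  assumes "bounded_prestructure S" "\<forall>p\<in>set_afml a. \<pi> p \<in> Mdom S"
  shows "range \<sigma> \<subseteq> Mdom S \<Longrightarrow> feval S \<pi> \<sigma> a \<le> feval S \<pi> \<sigma> (sup_close vs a)"
proof (induct vs arbitrary: \<sigma>)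
  case (Cons v vs)
  have "feval S \<pi> \<sigma> a \<le> feval S \<pi> (\<sigma>(v := \<sigma> v)) (sup_close vs a)" using Cons by simp
  also have "\<dots> \<le> (SUP x\<in>Mdom S. feval S \<pi> (\<sigma>(v := x)) (sup_close vs a))"
    using Cons.prems assms
    by (intro cSUP_upper feval_bdd_above) (auto simp: set_afml_sup_close)
  finally show ?case by simp
qed simp

lemma feval_sup_close_nonpos:
  assumes "Mdom S \<noteq> {}" "\<forall>\<sigma>. range \<sigma> \<subseteq> Mdom S \<longrightarrow> feval S \<pi> \<sigma> a \<le> 0"
  shows "range \<sigma> \<subseteq> Mdom S \<Longrightarrow> feval S \<pi> \<sigma> (sup_close vs a) \<le> 0"
proof (induct vs arbitrary: \<sigma>)
  case (Cons v vs)
  then have "\<forall>x\<in>Mdom S. feval S \<pi> (\<sigma>(v := x)) (sup_close vs a) \<le> 0"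
    by (auto intro!: Cons.hyps range_fun_upd_subset)
  then show ?case using assms(1) by (simp add: cSUP_least)
qed (use assms in simp)

lemma satisfies_sup_closeD:
  assumes "bounded_prestructure S" "satisfies_cond S (sup_close vs a)" "set_afml a = {}"
    and "range \<sigma> \<subseteq> Mdom S"
  shows "feval S \<pi> \<sigma> a \<le> 0"
proof -
  have "feval S \<pi> \<sigma> a \<le> feval S \<pi> \<sigma> (sup_close vs a)"
    using assms by (intro feval_le_sup_close) auto
  also have "\<dots> \<le> 0" using assms(2,4) unfolding satisfies_cond_def by blast
  finally show ?thesis .
qed

section \<open>Affine formulas in models of PA\<close>

context
  fixes N :: "('a, 'b) lstruct_scheme"
  assumes pa: "pa_model N"
begin

lemma pa_Mdom_nonempty: "Mdom N \<noteq> {}"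
  using pa unfolding pa_model_def by (elim conjE) simp

lemma pa_zero_in: "Mzero N \<in> Mdom N"
  using pa unfolding pa_model_def by (elim conjE) simp

lemma pa_one_in: "Mone N \<in> Mdom N"
  using pa unfolding pa_model_def by (elim conjE) simp

lemma pa_add_in: "x \<in> Mdom N \<Longrightarrow> y \<in> Mdom N \<Longrightarrow> Madd N x y \<in> Mdom N"
  using pa unfolding pa_model_def by (elim conjE) simp

lemma pa_succ_in: "x \<in> Mdom N \<Longrightarrow> Madd N x (Mone N) \<in> Mdom N"
  by (simp add: pa_add_in pa_one_in)

lemma pa_succ_ne_zero: "x \<in> Mdom N \<Longrightarrow> Madd N x (Mone N) \<noteq> Mzero N"
  using pa unfolding pa_model_def by (elim conjE) simp

lemma pa_succ_inj:
  "x \<in> Mdom N \<Longrightarrow> y \<in> Mdom N \<Longrightarrow> Madd N x (Mone N) = Madd N y (Mone N) \<Longrightarrow> x = y"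
  using pa unfolding pa_model_def by (elim conjE) simp

lemma pa_add_zero: "x \<in> Mdom N \<Longrightarrow> Madd N x (Mzero N) = x"
  using pa unfolding pa_model_def by (elim conjE) simp

lemma pa_add_succ:
  "x \<in> Mdom N \<Longrightarrow> y \<in> Mdom N \<Longrightarrow> Madd N x (Madd N y (Mone N)) = Madd N (Madd N x y) (Mone N)"
  using pa unfolding pa_model_def by (elim conjE) simp

lemma pa_induct:
  "range \<sigma> \<subseteq> Mdom N \<Longrightarrow> pholds N (\<sigma>(v := Mzero N)) \<phi> \<Longrightarrow>
   (\<forall>a\<in>Mdom N. pholds N (\<sigma>(v := a)) \<phi> \<longrightarrow> pholds N (\<sigma>(v := Madd N a (Mone N))) \<phi>) \<Longrightarrow>
   \<forall>a\<in>Mdom N. pholds N (\<sigma>(v := a)) \<phi>"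
  using pa unfolding pa_model_def by (elim conjE) simp

lemma pa_dist: "x \<in> Mdom N \<Longrightarrow> y \<in> Mdom N \<Longrightarrow> Md N x y = (if x = y then 0 else 1)"
  using pa unfolding pa_model_def by (elim conjE) simp

lemma pa_meet: "x \<in> Mdom N \<Longrightarrow> y \<in> Mdom N \<Longrightarrow> Mmeet N x y = (if pa_le N x y then x else y)"
  using pa unfolding pa_model_def by (elim conjE) simp

lemma pa_join: "x \<in> Mdom N \<Longrightarrow> y \<in> Mdom N \<Longrightarrow> Mjoin N x y = (if pa_le N x y then y else x)"
  using pa unfolding pa_model_def by (elim conjE) simp

lemma pa_zero_add: "y \<in> Mdom N \<Longrightarrow> Madd N (Mzero N) y = y"
proof -
  let ?\<phi> = "PEq (PAdd P0 (PVar 0)) (PVar 0)"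
  have "\<forall>a\<in>Mdom N. pholds N ((\<lambda>_. Mzero N)(0 := a)) ?\<phi>"
    by (rule pa_induct) (auto simp: pa_add_zero pa_zero_in pa_add_succ pa_one_in)
  then show "y \<in> Mdom N \<Longrightarrow> ?thesis" by auto
qed

lemma pa_zero_or_succ: "y \<in> Mdom N \<Longrightarrow> y = Mzero N \<or> (\<exists>z\<in>Mdom N. y = Madd N z (Mone N))"
proof -
  let ?\<phi> = "PNot (PAnd (PNot (PEq (PVar 0) P0)) (PNot (PEx 1 (PEq (PVar 0) (PAdd (PVar 1) P1)))))"
  have "\<forall>a\<in>Mdom N. pholds N ((\<lambda>_. Mzero N)(0 := a)) ?\<phi>"
    by (rule pa_induct) (auto simp: pa_zero_in)
  then show "y \<in> Mdom N \<Longrightarrow> ?thesis" by auto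
qed

lemma pa_one_ne_zero: "Mone N \<noteq> Mzero N"
  using pa_succ_ne_zero[OF pa_zero_in] pa_zero_add[OF pa_one_in] by simp

lemma pa_not_one_le_zero: "\<not> pa_le N (Mone N) (Mzero N)"
proof
  assume "pa_le N (Mone N) (Mzero N)"
  then obtain z where z: "z \<in> Mdom N" "Madd N (Mone N) z = Mzero N"
    unfolding pa_le_def by blast
  from pa_zero_or_succ[OF z(1)] show False
  proof
    assume "z = Mzero N"
    then show False using z pa_add_zero[OF pa_one_in] pa_one_ne_zero by simp
  next
    assume "\<exists>w\<in>Mdom N. z = Madd N w (Mone N)"
    then show False using z pa_add_succ[OF pa_one_in] pa_succ_ne_zero pa_add_in[OF pa_one_in] by force
  qed
qed

end

definition pa_definable :: "('a, 'b) lstruct_scheme \<Rightarrow> ((nat \<Rightarrow> 'a) \<Rightarrow> bool) \<Rightarrow> bool" where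
  "pa_definable N P \<longleftrightarrow> (\<exists>\<chi>. \<forall>\<sigma>. range \<sigma> \<subseteq> Mdom N \<longrightarrow> (pholds N \<sigma> \<chi> \<longleftrightarrow> P \<sigma>))"

lemma pa_definable_cong:
  "pa_definable N P \<Longrightarrow> (\<And>\<sigma>. range \<sigma> \<subseteq> Mdom N \<Longrightarrow> P \<sigma> = Q \<sigma>) \<Longrightarrow> pa_definable N Q"
  unfolding pa_definable_def by metis

lemma pa_definable_eq: "pa_definable N (\<lambda>\<sigma>. peval N \<sigma> s = peval N \<sigma> t)"
  unfolding pa_definable_def by (rule exI[of _ "PEq s t"]) simp

lemma pa_definable_not: "pa_definable N P \<Longrightarrow> pa_definable N (\<lambda>\<sigma>. \<not> P \<sigma>)"
  unfolding pa_definable_def by (metis pholds.simps(2))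

lemma pa_definable_conj:
  "pa_definable N P \<Longrightarrow> pa_definable N Q \<Longrightarrow> pa_definable N (\<lambda>\<sigma>. P \<sigma> \<and> Q \<sigma>)"
  unfolding pa_definable_def by (metis pholds.simps(3))

lemma pa_definable_disj:
  "pa_definable N P \<Longrightarrow> pa_definable N Q \<Longrightarrow> pa_definable N (\<lambda>\<sigma>. P \<sigma> \<or> Q \<sigma>)"
  by (rule pa_definable_cong[OF pa_definable_not[OF pa_definable_conj[OF pa_definable_not
        pa_definable_not]]]) auto

lemma pa_definable_ex:
  assumes "pa_definable N P"
  shows "pa_definable N (\<lambda>\<sigma>. \<exists>x\<in>Mdom N. P (\<sigma>(v := x)))"
proof -
  obtain \<chi> where \<chi>: "\<forall>\<sigma>. range \<sigma> \<subseteq> Mdom N \<longrightarrow> (pholds N \<sigma> \<chi> \<longleftrightarrow> P \<sigma>)"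
    using assms unfolding pa_definable_def by blast
  have "pholds N \<sigma> (PEx v \<chi>) = (\<exists>x\<in>Mdom N. P (\<sigma>(v := x)))" if "range \<sigma> \<subseteq> Mdom N" for \<sigma>
    using \<chi> range_fun_upd_subset[OF that] by auto
  then show ?thesis unfolding pa_definable_def by blast
qed

lemma pa_definable_all: "pa_definable N P \<Longrightarrow> pa_definable N (\<lambda>\<sigma>. \<forall>x\<in>Mdom N. P (\<sigma>(v := x)))"
  by (rule pa_definable_cong[OF pa_definable_not[OF pa_definable_ex[OF pa_definable_not]]]) auto

lemma pa_definable_const: "pa_definable N (\<lambda>\<sigma>. b)"
  by (cases b) (auto intro: pa_definable_cong[OF pa_definable_eq[of N P0 P0]]
      pa_definable_cong[OF pa_definable_not[OF pa_definable_eq[of N P0 P0]]])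

lemma pa_definable_finite_bex:
  "finite A \<Longrightarrow> (\<And>a. a \<in> A \<Longrightarrow> pa_definable N (P a)) \<Longrightarrow> pa_definable N (\<lambda>\<sigma>. \<exists>a\<in>A. P a \<sigma>)"
proof (induct A rule: finite_induct)
  case empty
  then show ?case using pa_definable_const[of N False] by simp
next
  case (insert x F)
  then have "pa_definable N (\<lambda>\<sigma>. P x \<sigma> \<or> (\<exists>a\<in>F. P a \<sigma>))" by (intro pa_definable_disj) auto
  then show ?case by simp
qed

definition pa_definable_op :: "('a, 'b) lstruct_scheme \<Rightarrow> ('a \<Rightarrow> 'a \<Rightarrow> 'a) \<Rightarrow> bool" where
  "pa_definable_op N f \<longleftrightarrow> (\<forall>w a b. pa_definable N (\<lambda>\<sigma>. \<sigma> w = f (\<sigma> a) (\<sigma> b)))"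

lemma pa_definable_op_add: "pa_definable_op N (Madd N)"
  unfolding pa_definable_op_def using pa_definable_eq[of N "PVar _" "PAdd (PVar _) (PVar _)"] by simp

lemma pa_definable_op_mul: "pa_definable_op N (Mmul N)"
  unfolding pa_definable_op_def using pa_definable_eq[of N "PVar _" "PMul (PVar _) (PVar _)"] by simp

lemma pa_definable_le: "pa_definable N (\<lambda>\<sigma>. pa_le N (\<sigma> a) (\<sigma> b))"
proof -
  obtain c :: nat where c: "c \<notin> {a, b}"
    using ex_new_if_finite[OF infinite_UNIV_nat, of "{a, b}"] by auto
  have "pa_definable N (\<lambda>\<sigma>. \<exists>x\<in>Mdom N.
      (\<lambda>\<sigma>. peval N \<sigma> (PAdd (PVar a) (PVar c)) = peval N \<sigma> (PVar b)) (\<sigma>(c := x)))"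
    by (rule pa_definable_ex[OF pa_definable_eq])
  then show ?thesis
    by (rule pa_definable_cong) (use c in \<open>auto simp: pa_le_def\<close>)
qed

lemma pa_definable_op_meet:
  assumes "pa_model N"
  shows "pa_definable_op N (Mmeet N)"
  unfolding pa_definable_op_def
proof (intro allI)
  fix w a b
  have "pa_definable N (\<lambda>\<sigma>. (pa_le N (\<sigma> a) (\<sigma> b) \<and> peval N \<sigma> (PVar w) = peval N \<sigma> (PVar a)) \<or>
     (\<not> pa_le N (\<sigma> a) (\<sigma> b) \<and> peval N \<sigma> (PVar w) = peval N \<sigma> (PVar b)))"
    (is "pa_definable N ?P")
    by (intro pa_definable_disj pa_definable_conj pa_definable_not pa_definable_le pa_definable_eq)
  then show "pa_definable N (\<lambda>\<sigma>. \<sigma> w = Mmeet N (\<sigma> a) (\<sigma> b))"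
  proof (rule pa_definable_cong)
    fix \<sigma> :: "nat \<Rightarrow> 'a" assume "range \<sigma> \<subseteq> Mdom N"
    then have "\<sigma> a \<in> Mdom N" "\<sigma> b \<in> Mdom N" by auto
    then show "?P \<sigma> = (\<sigma> w = Mmeet N (\<sigma> a) (\<sigma> b))" by (simp add: pa_meet[OF assms])
  qed
qed

lemma pa_definable_op_join:
  assumes "pa_model N"
  shows "pa_definable_op N (Mjoin N)"
  unfolding pa_definable_op_def
proof (intro allI)
  fix w a b
  have "pa_definable N (\<lambda>\<sigma>. (pa_le N (\<sigma> a) (\<sigma> b) \<and> peval N \<sigma> (PVar w) = peval N \<sigma> (PVar b)) \<or>
     (\<not> pa_le N (\<sigma> a) (\<sigma> b) \<and> peval N \<sigma> (PVar w) = peval N \<sigma> (PVar a)))"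
    (is "pa_definable N ?P")
    by (intro pa_definable_disj pa_definable_conj pa_definable_not pa_definable_le pa_definable_eq)
  then show "pa_definable N (\<lambda>\<sigma>. \<sigma> w = Mjoin N (\<sigma> a) (\<sigma> b))"
  proof (rule pa_definable_cong)
    fix \<sigma> :: "nat \<Rightarrow> 'a" assume "range \<sigma> \<subseteq> Mdom N"
    then have "\<sigma> a \<in> Mdom N" "\<sigma> b \<in> Mdom N" by auto
    then show "?P \<sigma> = (\<sigma> w = Mjoin N (\<sigma> a) (\<sigma> b))" by (simp add: pa_join[OF assms])
  qed
qed

lemma pa_definable_graph_op:
  assumes pa: "pa_model N" and f: "pa_definable_op N f"
    and s: "set_trm s = {}" "\<And>w. w \<notin> tvars s \<Longrightarrow> pa_definable N (\<lambda>\<sigma>. \<sigma> w = teval N \<pi> \<sigma> s)"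
    and t: "set_trm t = {}" "\<And>w. w \<notin> tvars t \<Longrightarrow> pa_definable N (\<lambda>\<sigma>. \<sigma> w = teval N \<pi> \<sigma> t)"
    and w: "w \<notin> tvars s \<union> tvars t"
  shows "pa_definable N (\<lambda>\<sigma>. \<sigma> w = f (teval N \<pi> \<sigma> s) (teval N \<pi> \<sigma> t))"
proof -
  have fin: "finite (tvars s \<union> tvars t \<union> {w})" by (simp add: finite_tvars)
  obtain a where a: "a \<notin> tvars s \<union> tvars t \<union> {w}"
    using ex_new_if_finite[OF infinite_UNIV_nat fin] by blast
  obtain b where b: "b \<notin> tvars s \<union> tvars t \<union> {w, a}"
    using ex_new_if_finite[OF infinite_UNIV_nat, of "tvars s \<union> tvars t \<union> {w, a}"]
    by (auto simp: finite_tvars)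
  let ?R = "\<lambda>\<sigma>. \<sigma> a = teval N \<pi> \<sigma> s \<and> \<sigma> b = teval N \<pi> \<sigma> t \<and> \<sigma> w = f (\<sigma> a) (\<sigma> b)"
  have "pa_definable N ?R"
    using a b f unfolding pa_definable_op_def by (intro pa_definable_conj s t) auto
  then have "pa_definable N (\<lambda>\<sigma>. \<exists>x\<in>Mdom N. (\<lambda>\<sigma>. \<exists>y\<in>Mdom N. ?R (\<sigma>(b := y))) (\<sigma>(a := x)))"
    by (intro pa_definable_ex)
  then show ?thesis
  proof (rule pa_definable_cong)
    fix \<sigma> :: "nat \<Rightarrow> 'a" assume r: "range \<sigma> \<subseteq> Mdom N"
    have "teval N \<pi> \<sigma> s \<in> Mdom N" "teval N \<pi> \<sigma> t \<in> Mdom N"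
      using s(1) t(1) by (auto intro: teval_in_Mdom[OF pa_model_imp_bounded_prestructure[OF pa] r])
    moreover have "teval N \<pi> (\<sigma>(a := x, b := y)) s = teval N \<pi> \<sigma> s"
      and "teval N \<pi> (\<sigma>(a := x, b := y)) t = teval N \<pi> \<sigma> t" for x y
      using a b by (auto intro: teval_cong)
    ultimately show "(\<exists>x\<in>Mdom N. \<exists>y\<in>Mdom N. ?R (\<sigma>(a := x, b := y))) =
        (\<sigma> w = f (teval N \<pi> \<sigma> s) (teval N \<pi> \<sigma> t))"
      using a b by auto
  qed
qed

lemma pa_definable_graph_teval:
  assumes pa: "pa_model N"
  shows "set_trm t = {} \<Longrightarrow> w \<notin> tvars t \<Longrightarrow> pa_definable N (\<lambda>\<sigma>. \<sigma> w = teval N \<pi> \<sigma> t)"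
proof (induct t arbitrary: w)
  case (Var v)
  then show ?case using pa_definable_eq[of N "PVar w" "PVar v"] by simp
next
  case Zero
  then show ?case using pa_definable_eq[of N "PVar w" P0] by simp
next
  case One
  then show ?case using pa_definable_eq[of N "PVar w" P1] by simp
next
  case (Add s t)
  then show ?case using pa_definable_graph_op[OF pa pa_definable_op_add, of s \<pi> t w] by simp
next
  case (Mul s t)
  then show ?case using pa_definable_graph_op[OF pa pa_definable_op_mul, of s \<pi> t w] by simp
next
  case (Meet s t)
  then show ?case using pa_definable_graph_op[OF pa pa_definable_op_meet[OF pa], of s \<pi> t w] by simp
next
  case (Join s t)
  then show ?case using pa_definable_graph_op[OF pa pa_definable_op_join[OF pa], of s \<pi> t w] by simp
qed simp

lemma pa_definable_teval_eq:
  assumes pa: "pa_model N" and st: "set_trm s = {}" "set_trm t = {}"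
  shows "pa_definable N (\<lambda>\<sigma>. teval N \<pi> \<sigma> s = teval N \<pi> \<sigma> t)"
proof -
  obtain w where w: "w \<notin> tvars s \<union> tvars t"
    using ex_new_if_finite[OF infinite_UNIV_nat, of "tvars s \<union> tvars t"] by (auto simp: finite_tvars)
  let ?R = "\<lambda>\<sigma>. \<sigma> w = teval N \<pi> \<sigma> s \<and> \<sigma> w = teval N \<pi> \<sigma> t"
  have "pa_definable N ?R"
    using w by (intro pa_definable_conj pa_definable_graph_teval[OF pa] st) auto
  then have "pa_definable N (\<lambda>\<sigma>. \<exists>x\<in>Mdom N. ?R (\<sigma>(w := x)))" by (rule pa_definable_ex)
  then show ?thesis
  proof (rule pa_definable_cong)
    fix \<sigma> :: "nat \<Rightarrow> 'a" assume r: "range \<sigma> \<subseteq> Mdom N"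
    have "teval N \<pi> \<sigma> s \<in> Mdom N"
      using st by (auto intro: teval_in_Mdom[OF pa_model_imp_bounded_prestructure[OF pa] r])
    moreover have "teval N \<pi> (\<sigma>(w := x)) s = teval N \<pi> \<sigma> s"
      and "teval N \<pi> (\<sigma>(w := x)) t = teval N \<pi> \<sigma> t" for x
      using w by (auto intro: teval_cong)
    ultimately show "(\<exists>x\<in>Mdom N. ?R (\<sigma>(w := x))) = (teval N \<pi> \<sigma> s = teval N \<pi> \<sigma> t)"
      by auto
  qed
qed

text \<open>In a discrete structure every atomic formula takes the values 0 and 1 only, so every
  affine formula takes values in the finite set \<open>fvalues\<close>.\<close>

fun fvalues :: "'p afml \<Rightarrow> real set" where
  "fvalues Cst1 = {1}"
| "fvalues (Dst s t) = {0, 1}"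
| "fvalues (Pls a b) = (\<lambda>(x, y). x + y) ` (fvalues a \<times> fvalues b)"
| "fvalues (Scl r a) = (\<lambda>x. r * x) ` fvalues a"
| "fvalues (SupQ v a) = fvalues a"
| "fvalues (InfQ v a) = fvalues a"

lemma finite_fvalues: "finite (fvalues a)"
  by (induct a) auto

lemma finite_image_cSup_eq_iff:
  fixes f :: "'x \<Rightarrow> real"
  shows "finite (f ` A) \<Longrightarrow> A \<noteq> {} \<Longrightarrow>
    Sup (f ` A) = c \<longleftrightarrow> (\<exists>x\<in>A. c = f x) \<and> (\<forall>x\<in>A. f x \<le> c)"
  by (simp add: cSup_eq_Max Max_eq_iff image_iff)

lemma finite_image_cInf_eq_iff:
  fixes f :: "'x \<Rightarrow> real"
  shows "finite (f ` A) \<Longrightarrow> A \<noteq> {} \<Longrightarrow>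
    Inf (f ` A) = c \<longleftrightarrow> (\<exists>x\<in>A. c = f x) \<and> (\<forall>x\<in>A. c \<le> f x)"
  by (simp add: cInf_eq_Min Min_eq_iff image_iff)

context
  fixes N :: "('a, 'b) lstruct_scheme"
  assumes pa: "pa_model N"
begin

lemma pa_feval_in_fvalues:
  "range \<sigma> \<subseteq> Mdom N \<Longrightarrow> \<forall>p\<in>set_afml a. \<pi> p \<in> Mdom N \<Longrightarrow> feval N \<pi> \<sigma> a \<in> fvalues a"
proof (induct a arbitrary: \<sigma>)
  case (Dst s t)
  then have "teval N \<pi> \<sigma> s \<in> Mdom N" "teval N \<pi> \<sigma> t \<in> Mdom N"
    by (auto intro!: teval_in_Mdom[OF pa_model_imp_bounded_prestructure[OF pa]])
  then show ?case by (simp add: pa_dist[OF pa])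
next
  case (Pls a b)
  then show ?case by force
next
  case (Scl r a)
  then show ?case by force
next
  case (SupQ v a)
  let ?A = "(\<lambda>x. feval N \<pi> (\<sigma>(v := x)) a) ` Mdom N"
  have sub: "?A \<subseteq> fvalues a" using SupQ by (auto intro!: SupQ.hyps range_fun_upd_subset)
  then have "Sup ?A \<in> ?A"
    using finite_subset[OF sub finite_fvalues] pa_Mdom_nonempty[OF pa] by (simp add: cSup_eq_Max)
  then show ?case using sub by auto
next
  case (InfQ v a)
  let ?A = "(\<lambda>x. feval N \<pi> (\<sigma>(v := x)) a) ` Mdom N"
  have sub: "?A \<subseteq> fvalues a" using InfQ by (auto intro!: InfQ.hyps range_fun_upd_subset)
  then have "Inf ?A \<in> ?A"
    using finite_subset[OF sub finite_fvalues] pa_Mdom_nonempty[OF pa] by (simp add: cInf_eq_Min)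
  then show ?case using sub by auto
qed simp

text \<open>The value of \<open>sup\<close> is the largest of finitely many possible values that is attained.\<close>

lemma pa_definable_feval: "set_afml a = {} \<Longrightarrow> pa_definable N (\<lambda>\<sigma>. R (feval N \<pi> \<sigma> a))"
proof (induct a arbitrary: R)
  case Cst1
  then show ?case using pa_definable_const by simp
next
  case (Dst s t)
  have "pa_definable N (\<lambda>\<sigma>. (teval N \<pi> \<sigma> s = teval N \<pi> \<sigma> t \<and> R 0) \<or>
      (teval N \<pi> \<sigma> s \<noteq> teval N \<pi> \<sigma> t \<and> R 1))"
    using Dst by (intro pa_definable_disj pa_definable_conj pa_definable_not
        pa_definable_teval_eq[OF pa] pa_definable_const) auto
  then show ?case
  proof (rule pa_definable_cong)
    fix \<sigma> :: "nat \<Rightarrow> 'a" assume r: "range \<sigma> \<subseteq> Mdom N"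
    have "teval N \<pi> \<sigma> s \<in> Mdom N" "teval N \<pi> \<sigma> t \<in> Mdom N"
      using Dst by (auto intro!: teval_in_Mdom[OF pa_model_imp_bounded_prestructure[OF pa] r])
    then show "((teval N \<pi> \<sigma> s = teval N \<pi> \<sigma> t \<and> R 0) \<or> (teval N \<pi> \<sigma> s \<noteq> teval N \<pi> \<sigma> t \<and> R 1))
      = R (feval N \<pi> \<sigma> (Dst s t))" by (simp add: pa_dist[OF pa])
  qed
next
  case (Pls a b)
  have "pa_definable N (\<lambda>\<sigma>. \<exists>p\<in>fvalues a \<times> fvalues b.
      R (fst p + snd p) \<and> feval N \<pi> \<sigma> a = fst p \<and> feval N \<pi> \<sigma> b = snd p)"
    using Pls by (intro pa_definable_finite_bex pa_definable_conj pa_definable_const)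
      (auto simp: finite_fvalues)
  then show ?case
  proof (rule pa_definable_cong)
    fix \<sigma> :: "nat \<Rightarrow> 'a" assume "range \<sigma> \<subseteq> Mdom N"
    then have "feval N \<pi> \<sigma> a \<in> fvalues a" "feval N \<pi> \<sigma> b \<in> fvalues b"
      using Pls.prems by (auto intro!: pa_feval_in_fvalues)
    then show "(\<exists>p\<in>fvalues a \<times> fvalues b. R (fst p + snd p) \<and>
        feval N \<pi> \<sigma> a = fst p \<and> feval N \<pi> \<sigma> b = snd p) = R (feval N \<pi> \<sigma> (Pls a b))"
      by force
  qed
next
  case (Scl r a)
  have "pa_definable N (\<lambda>\<sigma>. \<exists>x\<in>fvalues a. R (r * x) \<and> feval N \<pi> \<sigma> a = x)"
    using Scl by (intro pa_definable_finite_bex pa_definable_conj pa_definable_const)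
      (auto simp: finite_fvalues)
  then show ?case
  proof (rule pa_definable_cong)
    fix \<sigma> :: "nat \<Rightarrow> 'a" assume "range \<sigma> \<subseteq> Mdom N"
    then have "feval N \<pi> \<sigma> a \<in> fvalues a"
      using Scl.prems by (auto intro!: pa_feval_in_fvalues)
    then show "(\<exists>x\<in>fvalues a. R (r * x) \<and> feval N \<pi> \<sigma> a = x) = R (feval N \<pi> \<sigma> (Scl r a))"
      by auto
  qed
next
  case (SupQ v a)
  have "pa_definable N (\<lambda>\<sigma>. \<exists>c\<in>fvalues a. R c \<and>
      (\<exists>x\<in>Mdom N. (\<lambda>\<sigma>. c = feval N \<pi> \<sigma> a) (\<sigma>(v := x))) \<and>
      (\<forall>x\<in>Mdom N. (\<lambda>\<sigma>. feval N \<pi> \<sigma> a \<le> c) (\<sigma>(v := x))))"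
    using SupQ by (intro pa_definable_finite_bex pa_definable_conj pa_definable_const
        pa_definable_ex pa_definable_all) (auto simp: finite_fvalues)
  then show ?case
  proof (rule pa_definable_cong)
    fix \<sigma> :: "nat \<Rightarrow> 'a" assume r: "range \<sigma> \<subseteq> Mdom N"
    let ?f = "\<lambda>x. feval N \<pi> (\<sigma>(v := x)) a"
    have sub: "?f ` Mdom N \<subseteq> fvalues a"
      using SupQ.prems r by (auto intro!: pa_feval_in_fvalues range_fun_upd_subset)
    note eq = finite_image_cSup_eq_iff[OF finite_subset[OF sub finite_fvalues] pa_Mdom_nonempty[OF pa]]
    have "Sup (?f ` Mdom N) \<in> fvalues a" using eq[of "Sup (?f ` Mdom N)"] sub by blast
    then show "(\<exists>c\<in>fvalues a. R c \<and> (\<exists>x\<in>Mdom N. c = ?f x) \<and> (\<forall>x\<in>Mdom N. ?f x \<le> c)) =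
        R (feval N \<pi> \<sigma> (SupQ v a))"
      unfolding eq[symmetric] by auto
  qed
next
  case (InfQ v a)
  have "pa_definable N (\<lambda>\<sigma>. \<exists>c\<in>fvalues a. R c \<and>
      (\<exists>x\<in>Mdom N. (\<lambda>\<sigma>. c = feval N \<pi> \<sigma> a) (\<sigma>(v := x))) \<and>
      (\<forall>x\<in>Mdom N. (\<lambda>\<sigma>. c \<le> feval N \<pi> \<sigma> a) (\<sigma>(v := x))))"
    using InfQ by (intro pa_definable_finite_bex pa_definable_conj pa_definable_const
        pa_definable_ex pa_definable_all) (auto simp: finite_fvalues)
  then show ?case
  proof (rule pa_definable_cong)
    fix \<sigma> :: "nat \<Rightarrow> 'a" assume r: "range \<sigma> \<subseteq> Mdom N"
    let ?f = "\<lambda>x. feval N \<pi> (\<sigma>(v := x)) a"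
    have sub: "?f ` Mdom N \<subseteq> fvalues a"
      using InfQ.prems r by (auto intro!: pa_feval_in_fvalues range_fun_upd_subset)
    note eq = finite_image_cInf_eq_iff[OF finite_subset[OF sub finite_fvalues] pa_Mdom_nonempty[OF pa]]
    have "Inf (?f ` Mdom N) \<in> fvalues a" using eq[of "Inf (?f ` Mdom N)"] sub by blast
    then show "(\<exists>c\<in>fvalues a. R c \<and> (\<exists>x\<in>Mdom N. c = ?f x) \<and> (\<forall>x\<in>Mdom N. c \<le> ?f x)) =
        R (feval N \<pi> \<sigma> (InfQ v a))"
      unfolding eq[symmetric] by auto
  qed
qed

lemma pa_feval_antitone_induct:
  assumes a: "set_afml a = {}" and r: "range \<sigma> \<subseteq> Mdom N"
    and step: "\<forall>x\<in>Mdom N. feval N \<pi> (\<sigma>(X := Madd N x (Mone N))) a \<le> feval N \<pi> (\<sigma>(X := x)) a"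
    and y: "y \<in> Mdom N"
  shows "feval N \<pi> (\<sigma>(X := y)) a \<le> feval N \<pi> (\<sigma>(X := Mzero N)) a"
proof -
  let ?c = "feval N \<pi> (\<sigma>(X := Mzero N)) a"
  obtain \<chi> where \<chi>: "\<forall>\<tau>. range \<tau> \<subseteq> Mdom N \<longrightarrow> (pholds N \<tau> \<chi> \<longleftrightarrow> feval N \<pi> \<tau> a \<le> ?c)"
    using pa_definable_feval[OF a, of "\<lambda>z. z \<le> ?c" \<pi>] unfolding pa_definable_def by blast
  have "\<forall>y\<in>Mdom N. pholds N (\<sigma>(X := y)) \<chi>"
  proof (rule pa_induct[OF pa r])
    show "pholds N (\<sigma>(X := Mzero N)) \<chi>"
      using \<chi> range_fun_upd_subset[OF r pa_zero_in[OF pa]] by simp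
    show "\<forall>y\<in>Mdom N. pholds N (\<sigma>(X := y)) \<chi> \<longrightarrow> pholds N (\<sigma>(X := Madd N y (Mone N))) \<chi>"
      using \<chi> step range_fun_upd_subset[OF r] pa_succ_in[OF pa] by (meson order_trans)
  qed
  then show ?thesis using \<chi> range_fun_upd_subset[OF r] y by blast
qed

end

text \<open>\<open>K\<close> is the ratio of the largest to the smallest positive gap between elements of \<open>V\<close>.\<close>

lemma finite_gap_ratio_bound:
  assumes "finite (V :: real set)"
  obtains K where "K \<ge> 0" "\<forall>a\<in>V. \<forall>b\<in>V. \<forall>c\<in>V. \<forall>e\<in>V. e < c \<longrightarrow> a - b \<le> K * (c - e)"
proof -
  define D where "D = (\<lambda>(c, e). c - e) ` {p \<in> V \<times> V. snd p < fst p}"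
  have finD: "finite D" unfolding D_def using assms by auto
  have memD: "c - e \<in> D" if "c \<in> V" "e \<in> V" "e < c" for c e
    unfolding D_def using that by (auto intro: image_eqI[of _ _ "(c, e)"])
  have posD: "0 < d" if "d \<in> D" for d using that unfolding D_def by auto
  show thesis
  proof (cases "D = {}")
    case True
    then show thesis using memD by (intro that[of 0]) fastforce+
  next
    case False
    define \<delta> where "\<delta> = Min D"
    define \<Delta> where "\<Delta> = Max D"
    have \<delta>pos: "0 < \<delta>" unfolding \<delta>_def using Min_in[OF finD False] posD by blast
    have \<Delta>pos: "0 < \<Delta>" unfolding \<Delta>_def using Max_in[OF finD False] posD by blast
    have "\<forall>a\<in>V. \<forall>b\<in>V. \<forall>c\<in>V. \<forall>e\<in>V. e < c \<longrightarrow> a - b \<le> \<Delta> / \<delta> * (c - e)"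
    proof (intro ballI impI)
      fix a b c e assume abce: "a \<in> V" "b \<in> V" "c \<in> V" "e \<in> V" "e < c"
      have "\<delta> \<le> c - e" unfolding \<delta>_def using finD memD abce by simp
      have "\<Delta> = \<Delta> / \<delta> * \<delta>" using \<delta>pos by simp
      also have "\<dots> \<le> \<Delta> / \<delta> * (c - e)"
        using \<open>\<delta> \<le> c - e\<close> \<delta>pos \<Delta>pos by (intro mult_left_mono) auto
      finally have "\<Delta> \<le> \<Delta> / \<delta> * (c - e)" .
      moreover have "a - b \<le> \<Delta>" if "b < a"
        unfolding \<Delta>_def using finD memD abce that by simp
      ultimately show "a - b \<le> \<Delta> / \<delta> * (c - e)"
        using \<Delta>pos by (cases "b < a") auto
    qed
    moreover have "0 \<le> \<Delta> / \<delta>" using \<delta>pos \<Delta>pos by simp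
    ultimately show thesis by (rule that[rotated])
  qed
qed

context
  fixes N :: "('a, 'b) lstruct_scheme"
  assumes pa: "pa_model N"
begin

text \<open>Otherwise \<open>G\<close> would strictly decrease, hence be injective, on the numerals \<open>0, 1, 2, \<dots>\<close>.\<close>

lemma pa_finite_valued_not_strictly_decreasing:
  assumes fin: "finite V" and GV: "\<forall>x\<in>Mdom N. G x \<in> V"
  shows "\<exists>x\<in>Mdom N. (G x :: real) \<le> G (Madd N x (Mone N))"
proof (rule ccontr)
  define n where "n k = ((\<lambda>z. Madd N z (Mone N)) ^^ k) (Mzero N)" for k
  have n_in: "n k \<in> Mdom N" for k
    by (induct k) (auto simp: n_def pa_zero_in[OF pa] pa_succ_in[OF pa])
  assume "\<not> ?thesis"
  then have "G (Madd N x (Mone N)) < G x" if "x \<in> Mdom N" for x using that by (meson not_le)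
  then have "G (n (Suc k)) < G (n k)" for k using n_in by (simp add: n_def)
  then have "strict_mono (\<lambda>k. - G (n k))" by (simp add: strict_mono_Suc_iff)
  then have "inj (\<lambda>k. - G (n k))" by (rule strict_mono_imp_inj_on)
  moreover have "range (\<lambda>k. - G (n k)) \<subseteq> uminus ` V" using GV n_in by auto
  then have "finite (range (\<lambda>k. - G (n k)))" using fin finite_subset by blast
  ultimately show False using finite_imageD by fastforce
qed

lemma pa_descent_bound:
  assumes fin: "finite V" and GV: "\<forall>x\<in>Mdom N. G x \<in> V"
    and K: "K \<ge> 0" "\<forall>a\<in>V. \<forall>b\<in>V. \<forall>c\<in>V. \<forall>e\<in>V. e < c \<longrightarrow> a - b \<le> K * (c - e)"
    and induct: "(\<forall>x\<in>Mdom N. G (Madd N x (Mone N)) \<le> G x) \<Longrightarrow> (\<forall>y\<in>Mdom N. G y \<le> G (Mzero N))"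
    and y: "y \<in> Mdom N"
  shows "G y - G (Mzero N) - K * (SUP x\<in>Mdom N. G (Madd N x (Mone N)) - G x) \<le> (0::real)"
proof -
  let ?A = "(\<lambda>x. G (Madd N x (Mone N)) - G x) ` Mdom N"
  have "?A \<subseteq> (\<lambda>(c, e). c - e) ` (V \<times> V)" using GV pa_succ_in[OF pa] by fastforce
  then have "finite ?A" using finite_subset fin by blast
  then have up: "G (Madd N x (Mone N)) - G x \<le> Sup ?A" if "x \<in> Mdom N" for x
    using that by (intro cSUP_upper) (auto intro: bdd_above_finite)
  obtain x0 where "x0 \<in> Mdom N" "G x0 \<le> G (Madd N x0 (Mone N))"
    using pa_finite_valued_not_strictly_decreasing[OF fin GV] by blast
  then have "0 \<le> Sup ?A" using up by fastforce
  show ?thesis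
  proof (cases "G y \<le> G (Mzero N)")
    case True
    then show ?thesis using mult_nonneg_nonneg[OF K(1) \<open>0 \<le> Sup ?A\<close>] by linarith
  next
    case False
    then obtain x where x: "x \<in> Mdom N" "G x < G (Madd N x (Mone N))" using induct y by force
    have "G y - G (Mzero N) \<le> K * (G (Madd N x (Mone N)) - G x)"
      using K(2) GV y pa_zero_in[OF pa] x pa_succ_in[OF pa] by blast
    also have "\<dots> \<le> K * Sup ?A" using up[OF x(1)] K(1) by (rule mult_left_mono)
    finally show ?thesis by simp
  qed
qed

end

section \<open>Descent in models of AA\<close>

text \<open>With the parameters of \<open>\<phi>\<close> replaced by the terms \<open>\<tau> p\<close>, this is
  \<open>\<phi>(y) - \<phi>(0) - K \<cdot> sup\<^sub>x (\<phi>(x + 1) - \<phi>(x))\<close>, where \<open>x\<close> and \<open>y\<close> are the variables \<open>X\<close> and \<open>Y\<close>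
  and all free variables of \<open>\<phi>\<close> are identified.\<close>

definition descent_formula :: "'p afml \<Rightarrow> ('p \<Rightarrow> 'q trm) \<Rightarrow> nat \<Rightarrow> nat \<Rightarrow> real \<Rightarrow> 'q afml" where
  "descent_formula \<phi> \<tau> X Y K =
     Pls (Pls (fsub (\<lambda>u. Var Y) \<tau> \<phi>) (Scl (-1) (fsub (\<lambda>u. Zero) \<tau> \<phi>)))
       (Scl (-K) (SupQ X (Pls (fsub (\<lambda>u. Add (Var X) One) \<tau> \<phi>) (Scl (-1) (fsub (\<lambda>u. Var X) \<tau> \<phi>)))))"

lemma feval_fsub_const:
  assumes "\<forall>p. tvars (\<tau> p) \<inter> bvars \<phi> = {}" "tvars r \<inter> bvars \<phi> = {}"
  shows "feval S \<pi> \<sigma> (fsub (\<lambda>u. r) \<tau> \<phi>) = feval S (\<lambda>p. teval S \<pi> \<sigma> (\<tau> p)) (\<lambda>u. teval S \<pi> \<sigma> r) \<phi>"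
  using assms by (intro feval_fsub) auto

lemma feval_descent_formula:
  fixes S \<pi> \<sigma>
  assumes \<tau>: "\<forall>p. tvars (\<tau> p) \<inter> bvars \<phi> = {}" "\<forall>p. X \<notin> tvars (\<tau> p)"
    and XY: "X \<notin> bvars \<phi>" "Y \<notin> bvars \<phi>"
  defines "G \<equiv> \<lambda>x. feval S (\<lambda>p. teval S \<pi> \<sigma> (\<tau> p)) (\<lambda>u. x) \<phi>"
  shows "feval S \<pi> \<sigma> (descent_formula \<phi> \<tau> X Y K) =
    G (\<sigma> Y) - G (Mzero S) - K * (SUP x\<in>Mdom S. G (Madd S x (Mone S)) - G x)"
proof -
  have upd: "feval S \<pi> (\<sigma>(X := x)) (fsub (\<lambda>u. r) \<tau> \<phi>) = G (teval S \<pi> (\<sigma>(X := x)) r)"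
    if "tvars r \<subseteq> {X}" for r x
  proof -
    have "(\<lambda>p. teval S \<pi> (\<sigma>(X := x)) (\<tau> p)) = (\<lambda>p. teval S \<pi> \<sigma> (\<tau> p))"
      using \<tau>(2) by (simp add: teval_upd_fresh)
    then show ?thesis
      using feval_fsub_const[OF \<tau>(1), of r S \<pi> "\<sigma>(X := x)"] that XY(1) unfolding G_def by auto
  qed
  have "feval S \<pi> \<sigma> (fsub (\<lambda>u. Var Y) \<tau> \<phi>) = G (\<sigma> Y)"
    "feval S \<pi> \<sigma> (fsub (\<lambda>u. Zero) \<tau> \<phi>) = G (Mzero S)"
    unfolding G_def using \<tau>(1) XY(2) by (subst feval_fsub_const; simp)+
  moreover have "feval S \<pi> (\<sigma>(X := x)) (fsub (\<lambda>u. Var X) \<tau> \<phi>) = G x"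
    "feval S \<pi> (\<sigma>(X := x)) (fsub (\<lambda>u. Add (Var X) One) \<tau> \<phi>) = G (Madd S x (Mone S))" for x
    using upd[of "Var X" x] upd[of "Add (Var X) One" x] by simp_all
  ultimately show ?thesis unfolding descent_formula_def by simp
qed

lemma set_afml_descent_formula:
  "\<forall>p. set_trm (\<tau> p) = {} \<Longrightarrow> set_afml (descent_formula \<phi> \<tau> X Y K) = {}"
  unfolding descent_formula_def by (simp add: set_afml_fsub_empty)

context
  fixes \<phi> :: "'p afml" and \<tau> :: "'p \<Rightarrow> 'q trm" and X Y :: nat and K :: real
  assumes \<tau>: "\<forall>p. set_trm (\<tau> p) = {}" "\<forall>p. tvars (\<tau> p) \<inter> bvars \<phi> = {}" "\<forall>p. X \<notin> tvars (\<tau> p)"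
    and XY: "X \<notin> bvars \<phi>" "Y \<notin> bvars \<phi>"
    and K: "K \<ge> 0" "\<forall>a\<in>fvalues \<phi>. \<forall>b\<in>fvalues \<phi>. \<forall>c\<in>fvalues \<phi>. \<forall>e\<in>fvalues \<phi>.
      e < c \<longrightarrow> a - b \<le> K * (c - e)"
begin

text \<open>In a model of PA the formula is an instance of \<open>pa_descent_bound\<close>; the induction
  hypothesis needed there is supplied by the PA-definability of affine formulas.\<close>

lemma pa_descent_formula_nonpos:
  assumes pa: "pa_model N" and r: "range \<sigma> \<subseteq> Mdom N"
  shows "feval N \<pi> \<sigma> (descent_formula \<phi> \<tau> X Y K) \<le> 0"
proof -
  define G where "G x = feval N (\<lambda>p. teval N \<pi> \<sigma> (\<tau> p)) (\<lambda>u. x) \<phi>" for x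
  have eval_X: "feval N \<pi> (\<sigma>(X := x)) (fsub (\<lambda>u. Var X) \<tau> \<phi>) = G x" for x
    using feval_fsub_const[OF \<tau>(2), of "Var X" N \<pi> "\<sigma>(X := x)"] \<tau>(3) XY(1)
    by (simp add: G_def teval_upd_fresh)
  have "\<forall>p\<in>set_afml \<phi>. teval N \<pi> \<sigma> (\<tau> p) \<in> Mdom N"
    using \<tau>(1) by (simp add: teval_in_Mdom[OF pa_model_imp_bounded_prestructure[OF pa] r])
  then have GV: "\<forall>x\<in>Mdom N. G x \<in> fvalues \<phi>"
    unfolding G_def by (auto intro!: pa_feval_in_fvalues[OF pa])
  have "\<forall>y\<in>Mdom N. G y \<le> G (Mzero N)" if "\<forall>x\<in>Mdom N. G (Madd N x (Mone N)) \<le> G x"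
    using pa_feval_antitone_induct[OF pa _ r, of "fsub (\<lambda>u. Var X) \<tau> \<phi>" \<pi> X] \<tau>(1) that
    by (simp add: eval_X set_afml_fsub_empty)
  then show ?thesis
    unfolding feval_descent_formula[OF \<tau>(2,3) XY] G_def[symmetric]
    using pa_descent_bound[OF pa finite_fvalues GV K] r by blast
qed

lemma descent_sentence_in_AA:
  "sup_close (sorted_list_of_set (fvars (descent_formula \<phi> \<tau> X Y K))) (descent_formula \<phi> \<tau> X Y K)
     \<in> AA"
  unfolding AA_def
proof (intro CollectI conjI allI impI)
  show "sentence (sup_close (sorted_list_of_set (fvars (descent_formula \<phi> \<tau> X Y K)))
      (descent_formula \<phi> \<tau> X Y K))"
    unfolding sentence_def fvars_sup_close set_afml_sup_close
    by (simp add: finite_fvars set_afml_descent_formula \<tau>(1))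
  fix N :: "nat lstruct" assume pa: "pa_model N"
  then show "satisfies_cond N (sup_close (sorted_list_of_set (fvars (descent_formula \<phi> \<tau> X Y K)))
      (descent_formula \<phi> \<tau> X Y K))"
    unfolding satisfies_cond_def
    by (blast intro: feval_sup_close_nonpos pa_Mdom_nonempty pa_descent_formula_nonpos)
qed

end

text \<open>The parameters of \<open>\<phi>\<close> become fresh variables of a sentence of AA, which are then
  instantiated back to the parameters in \<open>M\<close>.\<close>

theorem models_AA_descent:
  fixes M :: "('a, 'b) lstruct_scheme" and \<phi> :: "'a afml"
  assumes AA: "models_AA M" and params: "set_afml \<phi> \<subseteq> Mdom M"
    and step: "\<forall>x\<in>Mdom M. feval M id (\<lambda>_. Madd M x (Mone M)) \<phi> \<le> feval M id (\<lambda>_. x) \<phi>"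
    and a: "a \<in> Mdom M"
  shows "feval M id (\<lambda>_. a) \<phi> \<le> feval M id (\<lambda>_. Mzero M) \<phi>"
proof -
  define P where "P = set_afml \<phi>"
  obtain h :: "'a \<Rightarrow> nat" where "inj_on h P"
    using finite_imp_inj_to_nat_seg[OF finite_set_afml[of \<phi>]] unfolding P_def by metis
  define m where "m = Suc (Max (insert 0 (bvars \<phi>)))"
  have bvars_less: "b < m" if "b \<in> bvars \<phi>" for b
    unfolding m_def using finite_bvars[of \<phi>] that by (simp add: le_imp_less_Suc)
  define g where "g p = m + 2 + h p" for p
  have "inj_on g P" using \<open>inj_on h P\<close> unfolding g_def inj_on_def by auto
  define \<tau> :: "'a \<Rightarrow> 'a trm" where "\<tau> p = (if p \<in> P then Var (g p) else Zero)" for p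
  have \<tau>: "\<forall>p. set_trm (\<tau> p) = {}" "\<forall>p. tvars (\<tau> p) \<inter> bvars \<phi> = {}" "\<forall>p. m \<notin> tvars (\<tau> p)"
    unfolding \<tau>_def g_def by (auto dest: bvars_less)
  have XY: "m \<notin> bvars \<phi>" "Suc m \<notin> bvars \<phi>" using bvars_less by force+
  obtain K where K: "K \<ge> 0" "\<forall>a\<in>fvalues \<phi>. \<forall>b\<in>fvalues \<phi>. \<forall>c\<in>fvalues \<phi>. \<forall>e\<in>fvalues \<phi>.
      e < c \<longrightarrow> a - b \<le> K * (c - e)"
    using finite_gap_ratio_bound[OF finite_fvalues] by blast
  let ?\<Theta> = "descent_formula \<phi> \<tau> m (Suc m) K"
  have sat: "satisfies_cond M (sup_close (sorted_list_of_set (fvars ?\<Theta>)) ?\<Theta>)"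
    using descent_sentence_in_AA[OF \<tau> XY K] AA unfolding models_AA_def by blast
  define \<sigma> where
    "\<sigma> u = (if u = Suc m then a else if u \<in> g ` P then inv_into P g u else Mzero M)" for u
  have bounded: "bounded_prestructure M"
    using AA lstructure_imp_bounded_prestructure unfolding models_AA_def by blast
  have "range \<sigma> \<subseteq> Mdom M"
    using a params bounded inv_into_into[of _ g P]
    unfolding \<sigma>_def P_def bounded_prestructure_def by auto
  then have "feval M id \<sigma> ?\<Theta> \<le> 0"
    using satisfies_sup_closeD[OF bounded sat set_afml_descent_formula[OF \<tau>(1)]] by blast
  moreover have "\<sigma> (g p) = p" if "p \<in> P" for p
    using that inv_into_f_f[OF \<open>inj_on g P\<close>] unfolding \<sigma>_def g_def by auto
  then have "feval M (\<lambda>p. teval M id \<sigma> (\<tau> p)) (\<lambda>u. x) \<phi> = feval M id (\<lambda>u. x) \<phi>" for x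
    by (intro feval_cong_params) (simp add: \<tau>_def P_def)
  moreover have "(SUP x\<in>Mdom M. feval M id (\<lambda>_. Madd M x (Mone M)) \<phi> - feval M id (\<lambda>_. x) \<phi>) \<le> 0"
    using step bounded unfolding bounded_prestructure_def by (intro cSUP_least) auto
  ultimately show ?thesis
    using mult_nonneg_nonpos[OF K(1)]
    by (force simp: feval_descent_formula[OF \<tau>(2,3) XY] \<sigma>_def)
qed

section \<open>Complete metric structures\<close>

lemma eventually_inverse_Suc_less:
  assumes "0 < e"
  shows "\<exists>N. \<forall>n\<ge>N. inverse (real (Suc n)) < e"
proof -
  obtain N where "inverse (real (Suc N)) < e" using reals_Archimedean[OF assms] by blast
  moreover have "inverse (real (Suc n)) \<le> inverse (real (Suc N))" if "N \<le> n" for n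
    using that by (simp add: le_imp_inverse_le)
  ultimately show ?thesis by (meson le_less_trans)
qed

context
  fixes M :: "('a, 'b) lstruct_scheme"
  assumes ls: "lstructure M"
begin

lemma lstructure_Mdom_nonempty: "Mdom M \<noteq> {}"
  using ls unfolding lstructure_def by (elim conjE) blast

lemma lstructure_zero_in: "Mzero M \<in> Mdom M"
  using ls unfolding lstructure_def by (elim conjE) blast

lemma lstructure_one_in: "Mone M \<in> Mdom M"
  using ls unfolding lstructure_def by (elim conjE) blast

lemma lstructure_dist_nonneg: "x \<in> Mdom M \<Longrightarrow> y \<in> Mdom M \<Longrightarrow> 0 \<le> Md M x y"
  using ls unfolding lstructure_def by (elim conjE) blast

lemma lstructure_dist_eq_0_iff: "x \<in> Mdom M \<Longrightarrow> y \<in> Mdom M \<Longrightarrow> Md M x y = 0 \<longleftrightarrow> x = y"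
  using ls unfolding lstructure_def by (elim conjE) blast

lemma lstructure_dist_commute: "x \<in> Mdom M \<Longrightarrow> y \<in> Mdom M \<Longrightarrow> Md M x y = Md M y x"
  using ls unfolding lstructure_def by (elim conjE) blast

lemma lstructure_dist_triangle:
  "x \<in> Mdom M \<Longrightarrow> y \<in> Mdom M \<Longrightarrow> z \<in> Mdom M \<Longrightarrow> Md M x z \<le> Md M x y + Md M y z"
  using ls unfolding lstructure_def by (elim conjE) blast

lemma lstructure_complete: "m_complete M"
  using ls unfolding lstructure_def by (elim conjE) blast

lemma lstructure_meet_in: "x \<in> Mdom M \<Longrightarrow> y \<in> Mdom M \<Longrightarrow> Mmeet M x y \<in> Mdom M"
  using ls unfolding lstructure_def lip_op_def by (elim conjE) blast

lemma lstructure_succ_in: "x \<in> Mdom M \<Longrightarrow> Madd M x (Mone M) \<in> Mdom M"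
  using ls lstructure_one_in unfolding lstructure_def lip_op_def by (elim conjE) blast

lemma lstructure_dist_succ_le:
  assumes "x \<in> Mdom M" "x' \<in> Mdom M"
  shows "Md M (Madd M x (Mone M)) (Madd M x' (Mone M)) \<le> Md M x x'"
proof -
  have "Md M (Madd M x (Mone M)) (Madd M x' (Mone M)) \<le> max (Md M x x') (Md M (Mone M) (Mone M))"
    using ls assms lstructure_one_in unfolding lstructure_def lip_op_def by (elim conjE) blast
  then show ?thesis
    using lstructure_dist_eq_0_iff[OF lstructure_one_in lstructure_one_in]
      lstructure_dist_nonneg[OF assms] by simp
qed

lemma dist_to_nonneg: "D \<subseteq> Mdom M \<Longrightarrow> D \<noteq> {} \<Longrightarrow> x \<in> Mdom M \<Longrightarrow> 0 \<le> dist_to M D x"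
  unfolding dist_to_def by (rule cINF_greatest) (auto intro: lstructure_dist_nonneg)

lemma bdd_below_dist: "D \<subseteq> Mdom M \<Longrightarrow> x \<in> Mdom M \<Longrightarrow> bdd_below ((\<lambda>y. Md M x y) ` D)"
  by (rule bdd_belowI[of _ 0]) (auto intro: lstructure_dist_nonneg)

lemma dist_to_le: "D \<subseteq> Mdom M \<Longrightarrow> x \<in> Mdom M \<Longrightarrow> y \<in> D \<Longrightarrow> dist_to M D x \<le> Md M x y"
  unfolding dist_to_def by (rule cINF_lower[OF bdd_below_dist])

lemma dist_to_greatest: "D \<noteq> {} \<Longrightarrow> (\<And>y. y \<in> D \<Longrightarrow> c \<le> Md M x y) \<Longrightarrow> c \<le> dist_to M D x"
  unfolding dist_to_def by (rule cINF_greatest)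

lemma dist_to_eq_0: "D \<subseteq> Mdom M \<Longrightarrow> x \<in> D \<Longrightarrow> dist_to M D x = 0"
  using dist_to_le[of D x x] dist_to_nonneg[of D x] lstructure_dist_eq_0_iff[of x x] by force

lemma approx_seq_inverse_Suc:
  assumes "\<forall>e>0. \<exists>y\<in>A. f y < (e::real)"
  obtains s where "\<And>n. s n \<in> A" "\<And>n. f (s n) < inverse (real (Suc n))"
proof -
  have "\<forall>n. \<exists>y. y \<in> A \<and> f y < inverse (real (Suc n))"
    using assms by (meson inverse_positive_iff_positive of_nat_0_less_iff zero_less_Suc)
  then show thesis using that by metis
qed

lemma dist_to_pos:
  assumes D: "m_closed M D" "D \<noteq> {}" and x: "x \<in> Mdom M" "x \<notin> D"
  shows "0 < dist_to M D x"
proof (rule ccontr)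
  have Dsub: "D \<subseteq> Mdom M" using D(1) unfolding m_closed_def by blast
  assume "\<not> 0 < dist_to M D x"
  then have approx: "\<forall>e>0. \<exists>y\<in>D. Md M x y < e"
    using cINF_less_iff[OF D(2) bdd_below_dist[OF Dsub x(1)]] unfolding dist_to_def
    by (meson not_less order_le_less_trans)
  then obtain s where s: "\<And>n. s n \<in> D" "\<And>n. Md M x (s n) < inverse (real (Suc n))"
    using approx_seq_inverse_Suc[OF approx] by blast
  have "m_converges M s x" unfolding m_converges_def
  proof (intro allI impI)
    fix e :: real assume "0 < e"
    then obtain N where N: "\<forall>n\<ge>N. inverse (real (Suc n)) < e"
      using eventually_inverse_Suc_less by blast
    have "Md M (s n) x = Md M x (s n)" for n
      using lstructure_dist_commute x(1) s(1) Dsub by blast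
    then show "\<exists>N. \<forall>n\<ge>N. Md M (s n) x < e" using N s(2) by (metis order.strict_trans)
  qed
  then show False using D(1) s(1) x unfolding m_closed_def by blast
qed

text \<open>If the successor map does not shrink distances, a limit of successors is a successor:
  the predecessors form a Cauchy sequence whose limit is the required predecessor.\<close>

lemma exists_pred_of_approx_succ:
  assumes expansive: "\<forall>x\<in>Mdom M. \<forall>z\<in>Mdom M. Md M x z \<le> Md M (Madd M x (Mone M)) (Madd M z (Mone M))"
    and y: "y \<in> Mdom M"
    and approx: "\<forall>e>0. \<exists>z\<in>Mdom M. Md M (Madd M z (Mone M)) y < e"
  shows "\<exists>z\<in>Mdom M. Madd M z (Mone M) = y"
proof -
  obtain s where s: "\<And>n. s n \<in> Mdom M" "\<And>n. Md M (Madd M (s n) (Mone M)) y < inverse (real (Suc n))"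
    using approx_seq_inverse_Suc[OF approx] by blast
  have dist_s: "Md M (s m) (s n) \<le> Md M (Madd M (s m) (Mone M)) y + Md M (Madd M (s n) (Mone M)) y"
    for m n
  proof -
    have "Md M (s m) (s n) \<le> Md M (Madd M (s m) (Mone M)) (Madd M (s n) (Mone M))"
      using expansive s(1) by blast
    also have "\<dots> \<le> Md M (Madd M (s m) (Mone M)) y + Md M y (Madd M (s n) (Mone M))"
      using lstructure_dist_triangle lstructure_succ_in s(1) y by blast
    finally show ?thesis using lstructure_dist_commute lstructure_succ_in s(1) y by metis
  qed
  have "\<exists>N. \<forall>m\<ge>N. \<forall>n\<ge>N. Md M (s m) (s n) < e" if e: "0 < e" for e
  proof -
    obtain N where N: "\<forall>n\<ge>N. inverse (real (Suc n)) < e / 2" using eventually_inverse_Suc_less[of "e / 2"] e by auto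
    have "Md M (s m) (s n) < e" if "N \<le> m" "N \<le> n" for m n
    proof -
      have "inverse (real (Suc m)) < e / 2" "inverse (real (Suc n)) < e / 2" using that N by auto
      then show ?thesis using dist_s[of m n] s(2)[of m] s(2)[of n] by linarith
    qed
    then show ?thesis by blast
  qed
  then obtain z where z: "z \<in> Mdom M" "m_converges M s z"
    using lstructure_complete s(1) unfolding m_complete_def by blast
  have "Md M (Madd M z (Mone M)) y < e" if e: "0 < e" for e
  proof -
    have "0 < e / 2" using e by simp
    then obtain N1 where N1: "\<forall>n\<ge>N1. Md M (s n) z < e / 2"
      using z(2) unfolding m_converges_def by blast
    obtain N2 where N2: "\<forall>n\<ge>N2. inverse (real (Suc n)) < e / 2" using eventually_inverse_Suc_less[of "e / 2"] e by auto
    define n where "n = max N1 N2"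
    have "Md M (Madd M z (Mone M)) y
        \<le> Md M (Madd M z (Mone M)) (Madd M (s n) (Mone M)) + Md M (Madd M (s n) (Mone M)) y"
      using lstructure_dist_triangle lstructure_succ_in z(1) s(1) y by blast
    also have "\<dots> \<le> Md M (s n) z + Md M (Madd M (s n) (Mone M)) y"
      using lstructure_dist_succ_le[OF z(1) s(1)] lstructure_dist_commute[OF z(1) s(1)] by simp
    also have "\<dots> < e"
      using N1[rule_format, of n] N2[rule_format, of n] s(2)[of n] unfolding n_def by simp
    finally show ?thesis .
  qed
  then have "Md M (Madd M z (Mone M)) y = 0"
    using lstructure_dist_nonneg[OF lstructure_succ_in[OF z(1)] y] by (metis less_irrefl order_le_less)
  then show ?thesis using lstructure_dist_eq_0_iff[OF lstructure_succ_in[OF z(1)] y] z(1) by blast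
qed

end

section \<open>Cuts in models of AA\<close>

definition zero_le_sentence :: "'p afml" where
  "zero_le_sentence = sup_close [0] (Dst (Meet Zero (Var 0)) Zero)"

definition succ_expansive_sentence :: "'p afml" where
  "succ_expansive_sentence = sup_close [0, 1]
     (Pls (Dst (Var 0) (Var 1)) (Scl (-1) (Dst (Add (Var 0) One) (Add (Var 1) One))))"

text \<open>\<open>inf\<^sub>z d(z + 1, x) \<le> d(1 \<and> x, 1)\<close>: every \<open>x \<ge> 1\<close> is approximately a successor.\<close>

definition approx_pred_body :: "'p afml" where
  "approx_pred_body = Pls (Dst (Add (Var 1) One) (Var 0)) (Scl (-1) (Dst (Meet One (Var 0)) One))"

definition approx_pred_sentence :: "'p afml" where
  "approx_pred_sentence = sup_close [0] (InfQ 1 approx_pred_body)"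

lemma zero_le_sentence_in_AA: "zero_le_sentence \<in> AA"
  unfolding AA_def
proof (intro CollectI conjI allI impI)
  show "sentence zero_le_sentence" unfolding zero_le_sentence_def sentence_def by simp
  fix N :: "nat lstruct" assume pa: "pa_model N"
  show "satisfies_cond N zero_le_sentence" unfolding satisfies_cond_def zero_le_sentence_def
  proof (intro allI impI feval_sup_close_nonpos[OF pa_Mdom_nonempty[OF pa]])
    fix \<pi> and \<sigma> :: "nat \<Rightarrow> nat" assume "range \<sigma> \<subseteq> Mdom N"
    then have y: "\<sigma> 0 \<in> Mdom N" by auto
    then have "pa_le N (Mzero N) (\<sigma> 0)" unfolding pa_le_def using pa_zero_add[OF pa y] by blast
    then show "feval N \<pi> \<sigma> (Dst (Meet Zero (Var 0)) Zero) \<le> 0"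
      using y pa_zero_in[OF pa] by (simp add: pa_meet[OF pa] pa_dist[OF pa])
  qed
qed

lemma succ_expansive_sentence_in_AA: "succ_expansive_sentence \<in> AA"
  unfolding AA_def
proof (intro CollectI conjI allI impI)
  show "sentence succ_expansive_sentence" unfolding succ_expansive_sentence_def sentence_def by auto
  fix N :: "nat lstruct" assume pa: "pa_model N"
  show "satisfies_cond N succ_expansive_sentence"
    unfolding satisfies_cond_def succ_expansive_sentence_def
  proof (intro allI impI feval_sup_close_nonpos[OF pa_Mdom_nonempty[OF pa]])
    fix \<pi> and \<sigma> :: "nat \<Rightarrow> nat" assume "range \<sigma> \<subseteq> Mdom N"
    then have y: "\<sigma> 0 \<in> Mdom N" "\<sigma> 1 \<in> Mdom N" by auto
    then show "feval N \<pi> \<sigma>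
        (Pls (Dst (Var 0) (Var 1)) (Scl (-1) (Dst (Add (Var 0) One) (Add (Var 1) One)))) \<le> 0"
      using pa_succ_in[OF pa] pa_succ_inj[OF pa y] by (simp add: pa_dist[OF pa])
  qed
qed

lemma approx_pred_sentence_in_AA: "approx_pred_sentence \<in> AA"
  unfolding AA_def
proof (intro CollectI conjI allI impI)
  show "sentence approx_pred_sentence"
    unfolding approx_pred_sentence_def approx_pred_body_def sentence_def by auto
  fix N :: "nat lstruct" assume pa: "pa_model N"
  show "satisfies_cond N approx_pred_sentence" unfolding satisfies_cond_def approx_pred_sentence_def
  proof (intro allI impI feval_sup_close_nonpos[OF pa_Mdom_nonempty[OF pa]])
    fix \<pi> and \<sigma> :: "nat \<Rightarrow> nat" assume r: "range \<sigma> \<subseteq> Mdom N"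
    then have y: "\<sigma> 0 \<in> Mdom N" by auto
    have "\<exists>z\<in>Mdom N. feval N \<pi> (\<sigma>(1 := z)) approx_pred_body \<le> 0"
    proof (cases "\<sigma> 0 = Mzero N")
      case True
      have "Mmeet N (Mone N) (Mzero N) = Mzero N"
        using pa_not_one_le_zero[OF pa] pa_zero_in[OF pa] pa_one_in[OF pa] by (simp add: pa_meet[OF pa])
      then have "feval N \<pi> (\<sigma>(1 := Mzero N)) approx_pred_body \<le> 0"
        using True pa_zero_in[OF pa] pa_one_in[OF pa] pa_succ_in[OF pa] pa_succ_ne_zero[OF pa]
          pa_one_ne_zero[OF pa]
        by (simp add: approx_pred_body_def pa_dist[OF pa])
      then show ?thesis using pa_zero_in[OF pa] by blast
    next
      case False
      then obtain z where z: "z \<in> Mdom N" "\<sigma> 0 = Madd N z (Mone N)"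
        using pa_zero_or_succ[OF pa y] by blast
      have "Mmeet N (Mone N) (\<sigma> 0) \<in> Mdom N"
        using y pa_one_in[OF pa] pa_model_imp_bounded_prestructure[OF pa]
        unfolding bounded_prestructure_def by blast
      then have "feval N \<pi> (\<sigma>(1 := z)) approx_pred_body \<le> 0"
        using z y pa_one_in[OF pa] by (simp add: approx_pred_body_def pa_dist[OF pa])
      then show ?thesis using z by blast
    qed
    then obtain z where z: "z \<in> Mdom N" "feval N \<pi> (\<sigma>(1 := z)) approx_pred_body \<le> 0" by blast
    have "bdd_below ((\<lambda>x. feval N \<pi> (\<sigma>(1 := x)) approx_pred_body) ` Mdom N)"
      by (rule feval_bdd_below[OF pa_model_imp_bounded_prestructure[OF pa] r])
        (simp add: approx_pred_body_def)
    then have "(INF x\<in>Mdom N. feval N \<pi> (\<sigma>(1 := x)) approx_pred_body) \<le> 0"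
      using cINF_lower[of _ _ z] z by fastforce
    then show "feval N \<pi> \<sigma> (InfQ 1 approx_pred_body) \<le> 0" by simp
  qed
qed

context
  fixes M :: "('a, 'b) lstruct_scheme"
  assumes AA: "models_AA M"
begin

lemma models_AA_lstructure: "lstructure M"
  using AA unfolding models_AA_def by blast

lemma models_AA_satisfies: "(\<phi> :: 'a afml) \<in> AA \<Longrightarrow> satisfies_cond M \<phi>"
  using AA unfolding models_AA_def by blast

lemmas models_AA_bounded = lstructure_imp_bounded_prestructure[OF models_AA_lstructure]

lemma models_AA_zero_le: "y \<in> Mdom M \<Longrightarrow> le_M M (Mzero M) y"
proof -
  assume y: "y \<in> Mdom M"
  have "feval M id (\<lambda>_. y) (Dst (Meet Zero (Var 0)) Zero) \<le> 0"
    by (rule satisfies_sup_closeD[OF models_AA_bounded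
          models_AA_satisfies[OF zero_le_sentence_in_AA, unfolded zero_le_sentence_def]])
      (use y in auto)
  then have "Md M (Mmeet M (Mzero M) y) (Mzero M) \<le> 0" by simp
  moreover have zero: "Mzero M \<in> Mdom M"
    by (rule lstructure_zero_in[OF models_AA_lstructure])
  moreover have meet: "Mmeet M (Mzero M) y \<in> Mdom M"
    by (rule lstructure_meet_in[OF models_AA_lstructure zero y])
  ultimately have "Md M (Mmeet M (Mzero M) y) (Mzero M) = 0"
    using lstructure_dist_nonneg[OF models_AA_lstructure meet zero] by linarith
  then show ?thesis
    unfolding le_M_def using lstructure_dist_eq_0_iff[OF models_AA_lstructure meet zero] by blast
qed

lemma models_AA_succ_expansive:
  "\<forall>x\<in>Mdom M. \<forall>z\<in>Mdom M. Md M x z \<le> Md M (Madd M x (Mone M)) (Madd M z (Mone M))"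
proof (intro ballI)
  fix x z assume "x \<in> Mdom M" "z \<in> Mdom M"
  then have "feval M id (\<lambda>v. if v = 0 then x else z)
      (Pls (Dst (Var 0) (Var 1)) (Scl (-1) (Dst (Add (Var 0) One) (Add (Var 1) One)))) \<le> 0"
    by (intro satisfies_sup_closeD[OF models_AA_bounded
          models_AA_satisfies[OF succ_expansive_sentence_in_AA, unfolded succ_expansive_sentence_def]])
      auto
  then show "Md M x z \<le> Md M (Madd M x (Mone M)) (Madd M z (Mone M))" by simp
qed

lemma models_AA_approx_pred:
  assumes y: "y \<in> Mdom M" and one_le: "le_M M (Mone M) y"
  shows "\<forall>e>0. \<exists>z\<in>Mdom M. Md M (Madd M z (Mone M)) y < e"
proof (intro allI impI)
  fix e :: real assume e: "0 < e"
  define \<sigma> where "\<sigma> = (\<lambda>_::nat. y)"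
  have r: "range \<sigma> \<subseteq> Mdom M" using y unfolding \<sigma>_def by auto
  have "feval M id \<sigma> (InfQ 1 approx_pred_body) \<le> 0"
    by (rule satisfies_sup_closeD[OF models_AA_bounded
          models_AA_satisfies[OF approx_pred_sentence_in_AA, unfolded approx_pred_sentence_def] _ r])
      (simp add: approx_pred_body_def)
  then have "(INF x\<in>Mdom M. feval M id (\<sigma>(1 := x)) approx_pred_body) < e" using e by simp
  moreover have "bdd_below ((\<lambda>x. feval M id (\<sigma>(1 := x)) approx_pred_body) ` Mdom M)"
    by (rule feval_bdd_below[OF models_AA_bounded r]) (simp add: approx_pred_body_def)
  ultimately obtain z where z: "z \<in> Mdom M" "feval M id (\<sigma>(1 := z)) approx_pred_body < e"
    using cINF_less_iff[OF lstructure_Mdom_nonempty[OF models_AA_lstructure]] by blast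
  have "Md M (Mone M) (Mone M) = 0"
    using lstructure_dist_eq_0_iff[OF models_AA_lstructure
        lstructure_one_in[OF models_AA_lstructure] lstructure_one_in[OF models_AA_lstructure]]
    by simp
  then have "Md M (Madd M z (Mone M)) y < e"
    using z(2) one_le unfolding le_M_def by (simp add: approx_pred_body_def \<sigma>_def)
  then show "\<exists>z\<in>Mdom M. Md M (Madd M z (Mone M)) y < e" using z(1) by blast
qed

end

lemma cut_zero_in:
  assumes AA: "models_AA M" and I: "is_cut M I"
  shows "Mzero M \<in> I"
proof -
  obtain y where y: "y \<in> I" using I unfolding is_cut_def by blast
  then have "le_M M (Mzero M) y" using I models_AA_zero_le[OF AA] unfolding is_cut_def by blast
  then show ?thesis
    using I y lstructure_zero_in[OF models_AA_lstructure[OF AA]] unfolding is_cut_def by blast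
qed

lemma dist_to_cut_succ_le:
  assumes ls: "lstructure M" and I: "is_cut M I" and x: "x \<in> Mdom M"
  shows "dist_to M I (Madd M x (Mone M)) \<le> dist_to M I x"
proof (rule dist_to_greatest[OF ls])
  show "I \<noteq> {}" using I unfolding is_cut_def by blast
  fix y assume y: "y \<in> I"
  have Isub: "I \<subseteq> Mdom M" using I unfolding is_cut_def by blast
  have "dist_to M I (Madd M x (Mone M)) \<le> Md M (Madd M x (Mone M)) (Madd M y (Mone M))"
    using I y by (intro dist_to_le[OF ls Isub lstructure_succ_in[OF ls x]]) (simp add: is_cut_def)
  also have "\<dots> \<le> Md M x y" using lstructure_dist_succ_le[OF ls x] Isub y by blast
  finally show "dist_to M I (Madd M x (Mone M)) \<le> Md M x y" .
qed

text \<open>Every element of the complement of the cut is the successor of an element of the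
  complement, and the successor map does not shrink distances.\<close>

lemma dist_to_cut_complement_succ_ge:
  assumes AA: "models_AA M" and I: "is_cut M I"
    and one_le: "\<forall>y\<in>Mdom M - I. le_M M (Mone M) y" and x: "x \<in> Mdom M"
  shows "dist_to M (Mdom M - I) x \<le> dist_to M (Mdom M - I) (Madd M x (Mone M))"
proof (cases "Mdom M - I = {}")
  case True
  then show ?thesis unfolding dist_to_def True by simp
next
  case False
  have ls: "lstructure M" using models_AA_lstructure[OF AA] .
  show ?thesis
  proof (rule dist_to_greatest[OF ls False])
    fix y assume y: "y \<in> Mdom M - I"
    obtain z where z: "z \<in> Mdom M" "Madd M z (Mone M) = y"
      using exists_pred_of_approx_succ[OF ls models_AA_succ_expansive[OF AA]]
        models_AA_approx_pred[OF AA] one_le y by blast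
    have "z \<in> Mdom M - I" using z y I unfolding is_cut_def by blast
    then have "dist_to M (Mdom M - I) x \<le> Md M x z" by (intro dist_to_le[OF ls _ x]) auto
    also have "\<dots> \<le> Md M (Madd M x (Mone M)) y"
      using models_AA_succ_expansive[OF AA] x z by blast
    finally show "dist_to M (Mdom M - I) x \<le> Md M (Madd M x (Mone M)) y" .
  qed
qed

lemma formula_definable_dist_to_descent:
  assumes AA: "models_AA M" and D: "formula_definable M D"
    and step: "\<forall>x\<in>Mdom M. dist_to M D (Madd M x (Mone M)) \<le> dist_to M D x"
    and a: "a \<in> Mdom M"
  shows "dist_to M D a \<le> dist_to M D (Mzero M)"
proof -
  obtain \<phi> :: "'a afml" where params: "set_afml \<phi> \<subseteq> Mdom M"
    and dist: "\<forall>x\<in>Mdom M. dist_to M D x = feval M id (\<lambda>_. x) \<phi>"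
    using D unfolding formula_definable_def by blast
  have ls: "lstructure M" using models_AA_lstructure[OF AA] .
  show ?thesis
    using models_AA_descent[OF AA params _ a] step dist a
      lstructure_succ_in[OF ls] lstructure_zero_in[OF ls] by simp
qed

lemma formula_definable_dist_to_ascent:
  assumes AA: "models_AA M" and D: "formula_definable M D"
    and step: "\<forall>x\<in>Mdom M. dist_to M D x \<le> dist_to M D (Madd M x (Mone M))"
    and a: "a \<in> Mdom M"
  shows "dist_to M D (Mzero M) \<le> dist_to M D a"
proof -
  obtain \<phi> :: "'a afml" where params: "set_afml \<phi> \<subseteq> Mdom M"
    and dist: "\<forall>x\<in>Mdom M. dist_to M D x = feval M id (\<lambda>_. x) \<phi>"
    using D unfolding formula_definable_def by blast
  have ls: "lstructure M" using models_AA_lstructure[OF AA] .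
  have "set_afml (Scl (-1) \<phi>) \<subseteq> Mdom M" using params by simp
  then show ?thesis
    using models_AA_descent[OF AA _ _ a, of "Scl (-1) \<phi>"] step dist a
      lstructure_succ_in[OF ls] lstructure_zero_in[OF ls] by simp
qed

lemma proper_cut_not_formula_definable:
  assumes AA: "models_AA M" and I: "proper_cut M I"
  shows "\<not> formula_definable M I"
proof
  assume def: "formula_definable M I"
  have ls: "lstructure M" and cut: "is_cut M I" and Isub: "I \<subseteq> Mdom M"
    using models_AA_lstructure[OF AA] I unfolding proper_cut_def is_cut_def by blast+
  obtain a where a: "a \<in> Mdom M" "a \<notin> I" using I Isub unfolding proper_cut_def by blast
  have "dist_to M I a \<le> dist_to M I (Mzero M)"
    using dist_to_cut_succ_le[OF ls cut] by (intro formula_definable_dist_to_descent[OF AA def _ a(1)]) blast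
  also have "\<dots> = 0" using dist_to_eq_0[OF ls Isub cut_zero_in[OF AA cut]] .
  finally show False
    using dist_to_pos[OF ls _ _ a] def cut unfolding formula_definable_def is_cut_def by fastforce
qed

lemma proper_cut_complement_not_formula_definable:
  assumes AA: "models_AA M" and I: "proper_cut M I"
    and one_le: "\<forall>y\<in>Mdom M - I. le_M M (Mone M) y"
  shows "\<not> formula_definable M (Mdom M - I)"
proof
  assume def: "formula_definable M (Mdom M - I)"
  have ls: "lstructure M" and cut: "is_cut M I"
    using models_AA_lstructure[OF AA] I unfolding proper_cut_def by blast+
  obtain d where d: "d \<in> Mdom M - I" using I cut unfolding proper_cut_def is_cut_def by blast
  have "dist_to M (Mdom M - I) (Mzero M) \<le> dist_to M (Mdom M - I) d"
    using dist_to_cut_complement_succ_ge[OF AA cut one_le]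
    by (intro formula_definable_dist_to_ascent[OF AA def _]) (use d in auto)
  also have "\<dots> = 0" using dist_to_eq_0[OF ls _ d] by blast
  finally show False
    using dist_to_pos[OF ls _ _ lstructure_zero_in[OF ls]] def d cut_zero_in[OF AA cut]
    unfolding formula_definable_def by fastforce
qed

theorem mainTheorem5:
  fixes M :: "'a lstruct" and I :: "'a set"
  assumes "models_AA M"
    and "proper_cut M I"
  shows "\<not> formula_definable M I \<and>
         ((\<forall>y\<in>Mdom M - I. le_M M (Mone M) y) \<longrightarrow> \<not> formula_definable M (Mdom M - I))"
  using proper_cut_not_formula_definable[OF assms]
    proper_cut_complement_not_formula_definable[OF assms] by blast

end
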